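(* Consider the closed-loop system $\Sigma$ described in the context, with Assumptions (A1)–(A4) holding, and with $\eta(s):=\frac{1}{\sqrt m}\rho_1^{-1}\!\big(r\frac{\sigma}{2}\alpha_3(s)\big)$. Suppose $$r\in\left[0,\ \frac{\alpha_3(\alpha_2^{-1}(\epsilon))}{\alpha_3(\alpha_1^{-1}(\bar\epsilon))}\right).$$ Then (i) the inter-event times $t_{k+1}-t_k$, $k\in\mathbb{N}=\{1,2,\dots\}$, are uniformly lower bounded by a positive constant that depends on the initial state; and (ii) the trajectories of $\Sigma$ are globally uniformly ultimately bounded, with ultimate bound $\alpha_1^{-1}(\epsilon)$ on $\|x(t)\|$.
   Context: Plant: $\dot x(t)=f(x(t),u(t),d(t))$ for $t\ge t_0=0$, with $x\in\mathbb{R}^n$, $u\in\mathbb{R}^m$, $d\in\mathbb{R}^q$. Standing assumptions: (A1) there exist $\gamma:\mathbb{R}^n\to\mathbb{R}^m$, a continuously differentiable $V:\mathbb{R}^n\to\mathbb{R}$ and class $\mathcal{K}_\infty$ functions $\alpha_1,\alpha_2,\alpha_3,\rho_1,\rho_2$ with $\alpha_1(\|x\|)\le V(x)\le\alpha_2(\|x\|)$ and $\frac{\partial V}{\partial x}f(x,\gamma(x)+e,d)\le-\alpha_3(\|x\|)+\rho_1(\|e\|)+\rho_2(\|d\|)$ for all $x\in\mathbb{R}^n,e\in\mathbb{R}^m,d\in\mathbb{R}^q$; (A2) $f$ and $\gamma$ are Lipschitz on compact sets, $f(0)=0$, $\gamma(0)=0$; (A3) there is $D\ge0$ with $\|d(t)\|\le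 D$ for all $t\ge0$; (A4) $\Phi=\{\phi_j:[0,\infty)\to\mathbb{R}\}_{j=0}^p$ consists of continuously differentiable functions, $\phi_0$ is a nonzero constant, and for a fixed $T>0$ the functions in $\Phi$ are linearly independent on $[0,T]$. Write $\phi(\tau)=[\phi_0(\tau),\dots,\phi_p(\tau)]^\top$ and $g(a,\tau)=a^\top\phi(\tau)$ for $a\in\mathbb{R}^{p+1}$. Control law: for event times $t_0<t_1<\dots$, $u(t_k+\tau)=a(k)^\top\phi(\tau)$ for $\tau\in[0,t_{k+1}-t_k)$, where $a(k)\in\mathbb{R}^{(p+1)\times m}$ has $i$-th column $a_i(k)$. Model: $\hat x$ solves $\dot{\hat x}=f(\hat x,\gamma(\hat x),0)$ on $[t_k,t_k+T]$ with $\hat x(t_k)=x(t_k)$, and $\hat u_i(\tau):=\gamma_i(\hat x(t_k+\tau))$ ($i$-th component). Coefficients: for each $i\in\{1,\dots,m\}$, $a_i(k)$ is the (unique) minimizer over $a\in\mathbb{R}^{p+1}$ of $\int_0^T|g(a,\tau)-\hat u_i(\tau)|^2d\tau$ subject to $|g(a,0)-\hat u_i(0)|\le\eta(\|\hat x(t_k)\|)$, with $\eta(s):=\frac{1}{\sqrt m}\rho_1^{-1}(r\frac{\sigma}{2}\alpha_3(s))$. Event-triggering rule: with $e(t):=u(t)-\gamma(x(t))$, a design parameter $\sigma\in(0,1)$ and $\epsilon:=\alpha_2\big(\alpha_3^{-1}(2\rho_2(D)/\sigma)\big)\ge0$, $t_{k+1}=\min\{t>t_k:\ \rho_1(\|e(t)\|)\ge\frac{\sigma}{2}\alpha_3(\|x(t)\|)\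 \text{and}\ V(x(t))\ge\epsilon\}$. The closed-loop system $\Sigma$ is the combination of plant, control law, coefficient optimization and triggering rule. Notation: $\epsilon_k:=V(x(t_k))$ for $k\in\mathbb{N}_0$, and $\bar\epsilon:=\max\{\epsilon,\epsilon_0\}$. *)

theory Defs
  imports "HOL-Analysis.Analysis"
begin

definition class_K :: "(real \<Rightarrow> real) \<Rightarrow> bool" where
  "class_K \<alpha> \<longleftrightarrow> continuous_on {0..} \<alpha> \<and> \<alpha> 0 = 0 \<and> strict_mono_on {0..} \<alpha>"

definition class_Kinf :: "(real \<Rightarrow> real) \<Rightarrow> bool" where
  "class_Kinf \<alpha> \<longleftrightarrow> class_K \<alpha> \<and> filterlim \<alpha> at_top at_top"

definition Kinv :: "(real \<Rightarrow> real) \<Rightarrow> real \<Rightarrow> real" where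
  "Kinv \<alpha> = the_inv_into {0..} \<alpha>"

definition gfun :: "nat \<Rightarrow> (nat \<Rightarrow> real \<Rightarrow> real) \<Rightarrow> (nat \<Rightarrow> real) \<Rightarrow> real \<Rightarrow> real" where
  "gfun p \<phi> c \<tau> = (\<Sum>j\<le>p. c j * \<phi> j \<tau>)"

definition trig_eps :: "(real \<Rightarrow> real) \<Rightarrow> (real \<Rightarrow> real) \<Rightarrow> (real \<Rightarrow> real) \<Rightarrow> real \<Rightarrow> real \<Rightarrow> real" where
  "trig_eps \<alpha>2 \<alpha>3 \<rho>2 D \<sigma> = \<alpha>2 (Kinv \<alpha>3 (2 * \<rho>2 D / \<sigma>))"

definition r_bound :: "(real \<Rightarrow> real) \<Rightarrow> (real \<Rightarrow> real) \<Rightarrow> (real \<Rightarrow> real) \<Rightarrow> real \<Rightarrow> real \<Rightarrow> real" where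
  "r_bound \<alpha>1 \<alpha>2 \<alpha>3 eps eps0 = \<alpha>3 (Kinv \<alpha>2 eps) / \<alpha>3 (Kinv \<alpha>1 (max eps eps0))"

text \<open>A (Caratheodory) solution of the closed-loop system Sigma.
  d: disturbance, x: state, u: applied input, te: event times (extended reals;
  te k = infinity means fewer than k+1 events occur), a k i: coefficient vector
  a_i(k), xh k: model trajectory x-hat on [t_k, t_k+T], shifted to [0,T].\<close>
definition closed_loop_solution ::
  "(real^'n \<Rightarrow> real^'m \<Rightarrow> real^'q \<Rightarrow> real^'n) \<Rightarrow> (real^'n \<Rightarrow> real^'m) \<Rightarrow> (real^'n \<Rightarrow> real)
   \<Rightarrow> (real \<Rightarrow> real) \<Rightarrow> (real \<Rightarrow> real) \<Rightarrow> (real \<Rightarrow> real) \<Rightarrow> (real \<Rightarrow> real) \<Rightarrow> real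
   \<Rightarrow> nat \<Rightarrow> (nat \<Rightarrow> real \<Rightarrow> real) \<Rightarrow> real \<Rightarrow> real \<Rightarrow> real
   \<Rightarrow> (real \<Rightarrow> real^'q) \<Rightarrow> (real \<Rightarrow> real^'n) \<Rightarrow> (real \<Rightarrow> real^'m) \<Rightarrow> (nat \<Rightarrow> ereal)
   \<Rightarrow> (nat \<Rightarrow> 'm \<Rightarrow> nat \<Rightarrow> real) \<Rightarrow> (nat \<Rightarrow> real \<Rightarrow> real^'n) \<Rightarrow> bool" where
  "closed_loop_solution f \<gamma> V \<alpha>2 \<alpha>3 \<rho>1 \<rho>2 D p \<phi> T \<sigma> r d x u te a xh \<longleftrightarrow>
    (let eps = trig_eps \<alpha>2 \<alpha>3 \<rho>2 D \<sigma>;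
         Tmax = (SUP k. te k);
         \<eta> = (\<lambda>s. 1 / sqrt (real CARD('m)) * Kinv \<rho>1 (r * (\<sigma> / 2) * \<alpha>3 s))
     in
      (\<forall>t\<ge>0. norm (d t) \<le> D)
    \<and> te 0 = 0
    \<and> (\<forall>k. te k < \<infinity> \<longrightarrow> te k < te (Suc k))
    \<and> (\<forall>k. te k = \<infinity> \<longrightarrow> te (Suc k) = \<infinity>)
    \<and> (\<forall>k t. te k \<le> ereal t \<and> ereal t < te (Suc k) \<longrightarrow>
          u t = (\<chi> i. gfun p \<phi> (a k i) (t - real_of_ereal (te k))))
    \<and> (\<forall>t. 0 \<le> t \<and> ereal t < Tmax \<longrightarrow>
          (\<lambda>s. f (x s) (u s) (d s)) absolutely_integrable_on {0..t}
        \<and> x t = x 0 + integral {0..t} (\<lambda>s. f (x s) (u s) (d s)))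
    \<and> (\<forall>k. te k < \<infinity> \<longrightarrow>
        (let tk = real_of_ereal (te k);
             uk = (\<lambda>t. (\<chi> i. gfun p \<phi> (a k i) (t - tk)) :: real^'m);
             trig = (\<lambda>t. \<rho>1 (norm (uk t - \<gamma> (x t))) \<ge> \<sigma> / 2 * \<alpha>3 (norm (x t))
                          \<and> V (x t) \<ge> eps)
         in
           xh k 0 = x tk
         \<and> (\<forall>\<tau>\<in>{0..T}. (xh k has_vector_derivative f (xh k \<tau>) (\<gamma> (xh k \<tau>)) 0) (at \<tau> within {0..T}))
         \<and> (\<forall>i. (let uh = (\<lambda>\<tau>. \<gamma> (xh k \<tau>) $ i);
                    J = (\<lambda>c. integral {0..T} (\<lambda>\<tau>. (gfun p \<phi> c \<tau> - uh \<tau>)\<^sup>2));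
                    feas = (\<lambda>c. \<bar>gfun p \<phi> c 0 - uh 0\<bar> \<le> \<eta> (norm (xh k 0)))
                in feas (a k i) \<and> (\<forall>c. feas c \<longrightarrow> J (a k i) \<le> J c)))
         \<and> (\<forall>t. tk < t \<and> ereal t < te (Suc k) \<longrightarrow> \<not> trig t)
         \<and> (te (Suc k) < \<infinity> \<longrightarrow> trig (real_of_ereal (te (Suc k)))))))"

end

theory Submission
  imports Defs
begin

text \<open>While \<open>V \<ge> eps\<close> and the trigger has not fired, the input error and the disturbance are both
  dominated by \<open>\<alpha>3 \<parallel>x\<parallel>\<close>, so \<open>V\<close> decreases at rate at least \<open>(1 - \<sigma>) \<kappa>\<close> with
  \<open>\<kappa> = \<alpha>3 (\<alpha>2\<inverse> eps)\<close>. Hence \<open>V (x t) \<le> max eps (V x0)\<close> and \<open>\<parallel>x t\<parallel> \<le> R = \<alpha>1\<inverse> (max eps (V x0))\<close>;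
  the model trajectories stay in the same ball because \<open>V\<close> decreases along the nominal flow.
  Comparing the optimal coefficients with the feasible constant fit and using the coercivity of the
  Gram matrix of the basis bounds them in terms of \<open>R\<close>, so on each inter-event interval the input, the
  vector field and the growth rate of the error \<open>u - \<gamma> x\<close> are bounded in terms of \<open>x0\<close> alone. The
  constraint at \<open>\<tau> = 0\<close> keeps the error below \<open>\<rho>1\<inverse> (r \<sigma>/2 \<alpha>3 R)\<close> right after an event, an event
  needs it to reach \<open>\<rho>1\<inverse> (\<sigma>/2 \<kappa>)\<close>, and \<open>r < r_bound\<close> makes the first strictly smaller: this gap,
  crossed at bounded speed, is the dwell time. Without accumulation of events the solution is global,
  and \<open>V\<close> reaches the level \<open>eps\<close> within \<open>(\<alpha>2 b - eps) / ((1 - \<sigma>) \<kappa>)\<close>.\<close>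

lemma class_Kinf_less_iff:
  assumes "class_Kinf \<alpha>" "0 \<le> s" "0 \<le> t"
  shows "\<alpha> s < \<alpha> t \<longleftrightarrow> s < t"
proof -
  have "strict_mono_on {0..} \<alpha>"
    using assms(1) by (simp add: class_Kinf_def class_K_def)
  then have "\<alpha> a < \<alpha> b" if "0 \<le> a" "a < b" for a b
    using that by (auto intro: strict_mono_onD)
  then show ?thesis
    using assms(2,3) by (metis less_asym linorder_neqE)
qed

lemma class_Kinf_le_iff:
  assumes "class_Kinf \<alpha>" "0 \<le> s" "0 \<le> t"
  shows "\<alpha> s \<le> \<alpha> t \<longleftrightarrow> s \<le> t"
  using class_Kinf_less_iff[OF assms(1,3,2)] by (simp add: not_less[symmetric])

lemma class_Kinf_zero: "class_Kinf \<alpha> \<Longrightarrow> \<alpha> 0 = 0"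
  by (simp add: class_Kinf_def class_K_def)

lemma class_Kinf_nonneg: "class_Kinf \<alpha> \<Longrightarrow> 0 \<le> s \<Longrightarrow> 0 \<le> \<alpha> s"
  using class_Kinf_le_iff[of \<alpha> 0 s] class_Kinf_zero[of \<alpha>] by simp

lemma class_Kinf_pos: "class_Kinf \<alpha> \<Longrightarrow> 0 < s \<Longrightarrow> 0 < \<alpha> s"
  using class_Kinf_less_iff[of \<alpha> 0 s] class_Kinf_zero[of \<alpha>] by simp

lemma class_Kinf_inj_on: "class_Kinf \<alpha> \<Longrightarrow> inj_on \<alpha> {0..}"
  by (rule inj_onI) (metis atLeast_iff class_Kinf_le_iff order.antisym order.refl)

lemma class_Kinf_surj_on:
  assumes "class_Kinf \<alpha>" "0 \<le> y"
  shows "y \<in> \<alpha> ` {0..}"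
proof -
  have "filterlim \<alpha> at_top at_top"
    using assms(1) by (simp add: class_Kinf_def)
  then obtain S where S: "\<And>s. s \<ge> S \<Longrightarrow> \<alpha> s \<ge> y"
    by (auto simp: filterlim_at_top eventually_at_top_linorder)
  have "continuous_on {0..max S 0} \<alpha>"
    using assms(1) by (auto simp: class_Kinf_def class_K_def intro: continuous_on_subset)
  moreover have "\<alpha> 0 \<le> y" "y \<le> \<alpha> (max S 0)"
    using class_Kinf_zero[OF assms(1)] assms(2) S by auto
  ultimately obtain s where "s \<in> {0..max S 0}" "\<alpha> s = y"
    using IVT'[of \<alpha> 0 y "max S 0"] by auto
  then show ?thesis by force
qed

lemma f_Kinv_f: "class_Kinf \<alpha> \<Longrightarrow> 0 \<le> y \<Longrightarrow> \<alpha> (Kinv \<alpha> y) = y"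
  unfolding Kinv_def by (metis f_the_inv_into_f class_Kinf_inj_on class_Kinf_surj_on)

lemma Kinv_nonneg: "class_Kinf \<alpha> \<Longrightarrow> 0 \<le> y \<Longrightarrow> 0 \<le> Kinv \<alpha> y"
  unfolding Kinv_def
  by (metis atLeast_iff the_inv_into_into class_Kinf_inj_on class_Kinf_surj_on subset_refl)

lemma Kinv_f_f: "class_Kinf \<alpha> \<Longrightarrow> 0 \<le> s \<Longrightarrow> Kinv \<alpha> (\<alpha> s) = s"
  unfolding Kinv_def by (simp add: class_Kinf_inj_on the_inv_into_f_f)

lemma Kinv_zero: "class_Kinf \<alpha> \<Longrightarrow> Kinv \<alpha> 0 = 0"
  using Kinv_f_f[of \<alpha> 0] class_Kinf_zero[of \<alpha>] by simp

lemma le_Kinv_iff: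
  "class_Kinf \<alpha> \<Longrightarrow> 0 \<le> s \<Longrightarrow> 0 \<le> y \<Longrightarrow> s \<le> Kinv \<alpha> y \<longleftrightarrow> \<alpha> s \<le> y"
  by (metis class_Kinf_le_iff f_Kinv_f Kinv_nonneg)

lemma Kinv_le_iff:
  "class_Kinf \<alpha> \<Longrightarrow> 0 \<le> s \<Longrightarrow> 0 \<le> y \<Longrightarrow> Kinv \<alpha> y \<le> s \<longleftrightarrow> y \<le> \<alpha> s"
  by (metis class_Kinf_le_iff f_Kinv_f Kinv_nonneg)

lemma Kinv_mono_iff:
  assumes "class_Kinf \<alpha>" "0 \<le> y" "0 \<le> z"
  shows "Kinv \<alpha> y \<le> Kinv \<alpha> z \<longleftrightarrow> y \<le> z" "Kinv \<alpha> y < Kinv \<alpha> z \<longleftrightarrow> y < z"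
  by (metis assms class_Kinf_le_iff class_Kinf_less_iff f_Kinv_f Kinv_nonneg)+

lemma Kinv_pos: "class_Kinf \<alpha> \<Longrightarrow> 0 < y \<Longrightarrow> 0 < Kinv \<alpha> y"
  using Kinv_mono_iff(2)[of \<alpha> 0 y] Kinv_zero[of \<alpha>] by simp

lemma abs_gfun_le: "\<bar>gfun p \<phi> c \<tau>\<bar> \<le> (\<Sum>j\<le>p. \<bar>c j\<bar>) * (\<Sum>j\<le>p. \<bar>\<phi> j \<tau>\<bar>)"
proof -
  have "\<bar>gfun p \<phi> c \<tau>\<bar> \<le> (\<Sum>j\<le>p. \<bar>c j\<bar> * \<bar>\<phi> j \<tau>\<bar>)"
    unfolding gfun_def by (rule order_trans[OF sum_abs]) (simp add: abs_mult)
  also have "\<dots> \<le> (\<Sum>j\<le>p. \<bar>c j\<bar> * (\<Sum>l\<le>p. \<bar>\<phi> l \<tau>\<bar>))"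
    by (intro sum_mono mult_left_mono) (auto intro: member_le_sum)
  finally show ?thesis by (simp add: sum_distrib_right)
qed

lemma norm_le_card_mult:
  fixes v :: "real^'m"
  assumes "\<And>i. \<bar>v $ i\<bar> \<le> B"
  shows "norm v \<le> real CARD('m) * B"
proof -
  have "norm v \<le> (\<Sum>i\<in>UNIV. \<bar>v $ i\<bar>)" by (rule norm_le_l1_cart)
  also have "\<dots> \<le> (\<Sum>i\<in>(UNIV::'m set). B)" by (intro sum_mono assms)
  finally show ?thesis by simp
qed

lemma norm_le_sqrt_card_mult:
  fixes v :: "real^'m"
  assumes "\<And>i. \<bar>v $ i\<bar> \<le> B"
  shows "norm v \<le> sqrt (real CARD('m)) * B"
proof -
  have B: "0 \<le> B" using assms[of undefined] by linarith
  have "norm v = sqrt (\<Sum>i\<in>UNIV. (v $ i)^2)" by (simp add: norm_vec_def L2_set_def)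
  also have "\<dots> \<le> sqrt (\<Sum>i\<in>(UNIV::'m set). B^2)"
    using assms B by (intro real_sqrt_le_mono sum_mono) (metis abs_le_square_iff abs_of_nonneg)
  also have "\<dots> = sqrt (real CARD('m)) * B" using B by (simp add: real_sqrt_mult)
  finally show ?thesis .
qed

lemma norm_gfun_vec_le:
  fixes c :: "'m::finite \<Rightarrow> nat \<Rightarrow> real"
  assumes "\<And>i. (\<Sum>j\<le>p. \<bar>c i j\<bar>) \<le> A" "(\<Sum>j\<le>p. \<bar>\<phi> j \<tau>\<bar>) \<le> P"
  shows "norm (\<chi> i. gfun p \<phi> (c i) \<tau>) \<le> real CARD('m) * (A * P)"
proof (rule norm_le_card_mult)
  fix i
  have "\<bar>gfun p \<phi> (c i) \<tau>\<bar> \<le> (\<Sum>j\<le>p. \<bar>c i j\<bar>) * (\<Sum>j\<le>p. \<bar>\<phi> j \<tau>\<bar>)"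
    by (rule abs_gfun_le)
  also have "\<dots> \<le> A * P"
    using assms by (intro mult_mono) (auto intro: sum_nonneg order_trans[OF sum_nonneg assms(1)])
  finally show "\<bar>(\<chi> i. gfun p \<phi> (c i) \<tau>) $ i\<bar> \<le> A * P"
    by simp
qed

lemma abs_le_sqrt_sum_squares:
  fixes c :: "nat \<Rightarrow> real"
  assumes "(\<Sum>j\<le>p. (c j)^2) \<le> Q" "j \<le> p"
  shows "\<bar>c j\<bar> \<le> sqrt Q"
proof -
  have "(c j)^2 \<le> (\<Sum>j\<le>p. (c j)^2)" using assms(2) by (intro member_le_sum) auto
  then show ?thesis using assms(1) by (intro real_le_rsqrt) simp
qed

lemma integral_interval_diff:
  fixes G :: "real \<Rightarrow> 'a::banach"
  assumes "G integrable_on {a..b}" "a \<le> s" "s \<le> t" "t \<le> b"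
  shows "integral {a..t} G - integral {a..s} G = integral {s..t} G"
proof -
  have "G integrable_on {a..t}"
    using assms by (intro integrable_subinterval_real[OF assms(1)]) auto
  then show ?thesis
    using Henstock_Kurzweil_Integration.integral_combine[of a s t G] assms by (simp add: algebra_simps)
qed

lemma norm_integral_le_length:
  fixes G :: "real \<Rightarrow> 'a::euclidean_space"
  assumes "G integrable_on {s..t}" "s \<le> t" "\<And>r. r \<in> {s..t} \<Longrightarrow> norm (G r) \<le> M"
  shows "norm (integral {s..t} G) \<le> M * (t - s)"
proof -
  have "norm (integral {s..t} G) \<le> integral {s..t} (\<lambda>_. M)"
    using assms by (intro integral_norm_bound_integral) auto
  then show ?thesis using assms(2) by (simp add: mult.commute)
qed

lemma increment_eq_integral:
  fixes G :: "real \<Rightarrow> 'a::banach"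
  assumes "\<And>t. t \<in> {a..b} \<Longrightarrow> X t = X a + integral {a..t} G" "G integrable_on {a..b}"
    and "a \<le> s" "s \<le> t" "t \<le> b"
  shows "X t - X s = integral {s..t} G"
  using assms(1)[of t] assms(1)[of s] integral_interval_diff[OF assms(2-5)] assms(3-5) by auto

lemma lipschitz_on_indefinite_integral:
  fixes G :: "real \<Rightarrow> 'a::euclidean_space"
  assumes "a \<le> b" "\<And>t. t \<in> {a..b} \<Longrightarrow> X t = X a + integral {a..t} G" "G integrable_on {a..b}"
    and "\<And>t. t \<in> {a..b} \<Longrightarrow> norm (G t) \<le> M"
  shows "M-lipschitz_on {a..b} X"
proof -
  have le: "dist (X t) (X s) \<le> M * dist t s" if "a \<le> s" "s \<le> t" "t \<le> b" for s t
  proof -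
    have "norm (integral {s..t} G) \<le> M * (t - s)"
      using that assms(4) by (intro norm_integral_le_length integrable_subinterval_real[OF assms(3)]) auto
    then show ?thesis
      using increment_eq_integral[OF assms(2,3) that] that by (simp add: dist_norm dist_real_def)
  qed
  show ?thesis
  proof (rule lipschitz_onI)
    have "norm (G a) \<le> M" using assms(1,4) by simp
    then show "0 \<le> M" using norm_ge_zero order_trans by blast
    fix s t assume "s \<in> {a..b}" "t \<in> {a..b}"
    then show "dist (X s) (X t) \<le> M * dist s t"
      using le[of s t] le[of t s] by (cases "s \<le> t") (auto simp: dist_commute)
  qed
qed

lemma inner_integral_approx:
  fixes G H :: "real \<Rightarrow> 'a::euclidean_space"
  assumes "G integrable_on {s..t}" "(\<lambda>r. H r \<bullet> G r) integrable_on {s..t}" "s \<le> t"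
    and "\<And>r. r \<in> {s..t} \<Longrightarrow> norm (g - H r) \<le> e"
    and "\<And>r. r \<in> {s..t} \<Longrightarrow> norm (G r) \<le> M"
    and "0 \<le> e"
  shows "\<bar>g \<bullet> integral {s..t} G - integral {s..t} (\<lambda>r. H r \<bullet> G r)\<bar> \<le> e * M * (t - s)"
proof -
  have "g \<bullet> integral {s..t} G - integral {s..t} (\<lambda>r. H r \<bullet> G r)
      = integral {s..t} (\<lambda>r. (g - H r) \<bullet> G r)"
    using assms(1,2)
    by (simp add: inner_commute[of g] integral_diff integrable_component inner_diff_left)
  also have "\<bar>\<dots>\<bar> \<le> e * M * (t - s)"
  proof -
    have "(\<lambda>r. (g - H r) \<bullet> G r) integrable_on {s..t}"
      using assms(1,2) by (simp add: inner_diff_left inner_commute[of g] integrable_diff integrable_component)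
    moreover have "norm ((g - H r) \<bullet> G r) \<le> e * M" if "r \<in> {s..t}" for r
      using Cauchy_Schwarz_ineq2[of "g - H r" "G r"] mult_mono[OF assms(4,5)[OF that]] assms(6)
      by (simp add: order_trans)
    ultimately show ?thesis using norm_integral_le_length[OF _ assms(3)] by fastforce
  qed
  finally show ?thesis .
qed

lemma continuous_inner_absolutely_integrable:
  fixes H G :: "real \<Rightarrow> 'a::euclidean_space"
  assumes "continuous_on {a..b} H" "G absolutely_integrable_on {a..b}"
  shows "(\<lambda>s. H s \<bullet> G s) absolutely_integrable_on {a..b}"
proof (rule absolutely_integrable_bounded_measurable_product[where h = "(\<bullet>)"])
  show "bilinear ((\<bullet>) :: 'a \<Rightarrow> 'a \<Rightarrow> real)"
    by (simp add: bilinear_conv_bounded_bilinear bounded_bilinear_inner)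
  show "H \<in> borel_measurable (lebesgue_on {a..b})"
    by (rule continuous_imp_measurable_on_sets_lebesgue[OF assms(1)]) auto
  show "bounded (H ` {a..b})"
    by (intro compact_imp_bounded compact_continuous_image assms(1) compact_Icc)
qed (use assms(2) in auto)

lemma linearisation_along_lipschitz_path:
  fixes X :: "real \<Rightarrow> 'a::euclidean_space" and V :: "'a \<Rightarrow> real"
  assumes X: "M-lipschitz_on {a..b} X" and V: "(V has_derivative (\<lambda>h. g \<bullet> h)) (at (X t0))"
    and t0: "t0 \<in> {a..b}" and e: "0 < e"
  shows "\<exists>d>0. \<forall>y\<in>{a..b}. \<bar>y - t0\<bar> < d \<longrightarrow>
    \<bar>V (X y) - V (X t0) - g \<bullet> (X y - X t0)\<bar> \<le> e * (M * \<bar>y - t0\<bar>)"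
proof -
  have M: "0 \<le> M"
    using lipschitz_on_nonneg[OF X] .
  obtain d where d: "d > 0"
    "\<And>z. norm (z - X t0) < d \<Longrightarrow> \<bar>V z - V (X t0) - g \<bullet> (z - X t0)\<bar> \<le> e * norm (z - X t0)"
    using V[unfolded has_derivative_within_alt] e by force
  have "\<bar>V (X y) - V (X t0) - g \<bullet> (X y - X t0)\<bar> \<le> e * (M * \<bar>y - t0\<bar>)"
    if "y \<in> {a..b}" "\<bar>y - t0\<bar> < d / (M + 1)" for y
  proof -
    have Xy: "norm (X y - X t0) \<le> M * \<bar>y - t0\<bar>"
      using lipschitz_onD[OF X that(1) t0] by (simp add: dist_norm dist_real_def)
    have "M * \<bar>y - t0\<bar> < d"
      using that(2) M d(1) by (simp add: field_simps)
    then have "\<bar>V (X y) - V (X t0) - g \<bullet> (X y - X t0)\<bar> \<le> e * norm (X y - X t0)"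
      using d(2) Xy by simp
    also have "\<dots> \<le> e * (M * \<bar>y - t0\<bar>)"
      using Xy e by (intro mult_left_mono) auto
    finally show ?thesis .
  qed
  moreover have "0 < d / (M + 1)"
    using d(1) M by simp
  ultimately show ?thesis
    by blast
qed

text \<open>Near a point \<open>t0\<close>, both \<open>V \<circ> X\<close> and the integral of \<open>gradV (X s) \<bullet> G s\<close> are approximated by
  the linearisation \<open>gradV (X t0) \<bullet> (X s2 - X s1)\<close>.\<close>
lemma chain_rule_local_increment:
  fixes X G :: "real \<Rightarrow> 'a::euclidean_space" and V :: "'a \<Rightarrow> real" and gradV :: "'a \<Rightarrow> 'a"
  assumes X: "\<And>t. t \<in> {a..b} \<Longrightarrow> X t = X a + integral {a..t} G" "M-lipschitz_on {a..b} X"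
    and G: "G integrable_on {a..b}" "\<And>t. t \<in> {a..b} \<Longrightarrow> norm (G t) \<le> M"
    and V: "(V has_derivative (\<lambda>h. gradV (X t0) \<bullet> h)) (at (X t0))"
    and gradVX: "continuous_on {a..b} (\<lambda>s. gradV (X s))"
    and w: "(\<lambda>s. gradV (X s) \<bullet> G s) integrable_on {a..b}"
    and t0: "t0 \<in> {a..b}" and e: "0 < e"
  shows "\<exists>d>0. \<forall>s1 s2. a \<le> s1 \<and> s1 \<le> s2 \<and> s2 \<le> b \<and> s2 - s1 < d \<and> (t0 = s1 \<or> t0 = s2) \<longrightarrow>
    \<bar>V (X s2) - V (X s1) - integral {s1..s2} (\<lambda>s. gradV (X s) \<bullet> G s)\<bar> \<le> e * (s2 - s1)"
proof -
  define e1 g0 where "e1 = e / (2 * (M + 1))" and "g0 = gradV (X t0)"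
  have e1: "e1 > 0" "2 * (e1 * M) \<le> e"
    using e lipschitz_on_nonneg[OF X(2)] by (auto simp: e1_def field_simps)
  obtain d1 where d1: "d1 > 0" "\<And>y. y \<in> {a..b} \<Longrightarrow> \<bar>y - t0\<bar> < d1 \<Longrightarrow>
      \<bar>V (X y) - V (X t0) - g0 \<bullet> (X y - X t0)\<bar> \<le> e1 * (M * \<bar>y - t0\<bar>)"
    using linearisation_along_lipschitz_path[OF X(2) V t0 e1(1)] unfolding g0_def by blast
  obtain d2 where d2: "d2 > 0"
    "\<And>s. s \<in> {a..b} \<Longrightarrow> dist s t0 < d2 \<Longrightarrow> dist (gradV (X s)) g0 < e1"
    using gradVX t0 e1 unfolding continuous_on_iff g0_def by blast
  have "\<bar>V (X s2) - V (X s1) - integral {s1..s2} (\<lambda>s. gradV (X s) \<bullet> G s)\<bar> \<le> e * (s2 - s1)"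
    if s: "a \<le> s1" "s1 \<le> s2" "s2 \<le> b" "s2 - s1 < min d1 d2" "t0 = s1 \<or> t0 = s2" for s1 s2
  proof -
    have lin: "\<bar>V (X s2) - V (X s1) - g0 \<bullet> (X s2 - X s1)\<bar> \<le> e1 * M * (s2 - s1)"
      using s d1(2)[of s2] d1(2)[of s1]
      by (auto simp: abs_minus_commute inner_diff_right algebra_simps)
    have "\<bar>g0 \<bullet> integral {s1..s2} G - integral {s1..s2} (\<lambda>s. gradV (X s) \<bullet> G s)\<bar> \<le> e1 * M * (s2 - s1)"
    proof (rule inner_integral_approx)
      show "G integrable_on {s1..s2}" "(\<lambda>r. gradV (X r) \<bullet> G r) integrable_on {s1..s2}"
        using s integrable_subinterval_real[OF G(1)] integrable_subinterval_real[OF w] by auto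
      show "norm (g0 - gradV (X r)) \<le> e1" if "r \<in> {s1..s2}" for r
        using d2(2)[of r] that s by (auto simp: dist_norm dist_real_def norm_minus_commute)
    qed (use s G(2) e1 in auto)
    moreover have "X s2 - X s1 = integral {s1..s2} G"
      using increment_eq_integral[OF X(1) G(1) s(1-3)] .
    ultimately have "\<bar>V (X s2) - V (X s1) - integral {s1..s2} (\<lambda>s. gradV (X s) \<bullet> G s)\<bar>
        \<le> 2 * (e1 * M) * (s2 - s1)"
      using lin by auto
    also have "\<dots> \<le> e * (s2 - s1)"
      using e1(2) s(2) by (intro mult_right_mono) auto
    finally show ?thesis .
  qed
  moreover have "min d1 d2 > 0"
    using d1(1) d2(1) by simp
  ultimately show ?thesis
    by (intro exI[of _ "min d1 d2"]) auto
qed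

lemma has_derivative_zero_if_local_increment:
  fixes W :: "real \<Rightarrow> real"
  assumes t0: "t0 \<in> {a..b}"
    and incr: "\<And>e. 0 < e \<Longrightarrow> \<exists>d>0. \<forall>s1 s2. a \<le> s1 \<and> s1 \<le> s2 \<and> s2 \<le> b \<and> s2 - s1 < d \<and>
      (t0 = s1 \<or> t0 = s2) \<longrightarrow> \<bar>W s2 - W s1\<bar> \<le> e * (s2 - s1)"
  shows "(W has_derivative (\<lambda>h. 0)) (at t0 within {a..b})"
proof (subst has_derivative_within_alt, intro conjI allI impI)
  fix e :: real assume "0 < e"
  then obtain d where d: "d > 0" "\<forall>s1 s2. a \<le> s1 \<and> s1 \<le> s2 \<and> s2 \<le> b \<and> s2 - s1 < d \<and>
      (t0 = s1 \<or> t0 = s2) \<longrightarrow> \<bar>W s2 - W s1\<bar> \<le> e * (s2 - s1)"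
    using incr by blast
  have "norm (W y - W t0 - 0) \<le> e * norm (y - t0)" if y: "y \<in> {a..b}" "norm (y - t0) < d" for y
  proof (cases "t0 \<le> y")
    case True
    then show ?thesis
      using d(2)[rule_format, of t0 y] t0 y by auto
  next
    case False
    then show ?thesis
      using d(2)[rule_format, of y t0] t0 y by (auto simp: abs_minus_commute)
  qed
  then show "\<exists>d>0. \<forall>y\<in>{a..b}. norm (y - t0) < d \<longrightarrow> norm (W y - W t0 - 0) \<le> e * norm (y - t0)"
    using d(1) by blast
qed simp

text \<open>The difference between \<open>V \<circ> X\<close> and the indefinite integral has derivative zero everywhere.\<close>
lemma chain_rule_indefinite_integral:
  fixes X G :: "real \<Rightarrow> 'a::euclidean_space" and V :: "'a \<Rightarrow> real" and gradV :: "'a \<Rightarrow> 'a"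
  assumes ab: "a \<le> b"
    and X: "\<And>t. t \<in> {a..b} \<Longrightarrow> X t = X a + integral {a..t} G"
    and G: "G absolutely_integrable_on {a..b}" "\<And>t. t \<in> {a..b} \<Longrightarrow> norm (G t) \<le> M"
    and V: "\<And>z. (V has_derivative (\<lambda>h. gradV z \<bullet> h)) (at z)" "continuous_on UNIV gradV"
  shows "(\<lambda>s. gradV (X s) \<bullet> G s) absolutely_integrable_on {a..b}"
    and "V (X b) - V (X a) = integral {a..b} (\<lambda>s. gradV (X s) \<bullet> G s)"
proof -
  have Gint: "G integrable_on {a..b}"
    using G(1) by (simp add: absolutely_integrable_on_def)
  have Xlip: "M-lipschitz_on {a..b} X"
    by (rule lipschitz_on_indefinite_integral[OF ab X Gint G(2)])
  have gradVX: "continuous_on {a..b} (\<lambda>s. gradV (X s))"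
    using continuous_on_compose2[OF V(2) lipschitz_on_continuous_on[OF Xlip]] by auto
  define w where "w = (\<lambda>s. gradV (X s) \<bullet> G s)"
  show "w absolutely_integrable_on {a..b}"
    unfolding w_def by (rule continuous_inner_absolutely_integrable[OF gradVX G(1)])
  then have wint: "w integrable_on {a..b}"
    by (simp add: absolutely_integrable_on_def)
  define W where "W t = V (X t) - integral {a..t} w" for t
  have "(W has_derivative (\<lambda>h. 0)) (at t0 within {a..b})" if t0: "t0 \<in> {a..b}" for t0
  proof (rule has_derivative_zero_if_local_increment[OF t0])
    fix e :: real assume "0 < e"
    have "W s2 - W s1 = V (X s2) - V (X s1) - integral {s1..s2} w" if "a \<le> s1" "s1 \<le> s2" "s2 \<le> b" for s1 s2
      using integral_interval_diff[OF wint that] by (simp add: W_def)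
    moreover have "\<exists>d>0. \<forall>s1 s2. a \<le> s1 \<and> s1 \<le> s2 \<and> s2 \<le> b \<and> s2 - s1 < d \<and> (t0 = s1 \<or> t0 = s2) \<longrightarrow>
        \<bar>V (X s2) - V (X s1) - integral {s1..s2} w\<bar> \<le> e * (s2 - s1)"
      unfolding w_def
    proof (rule chain_rule_local_increment)
      show "(\<lambda>s. gradV (X s) \<bullet> G s) integrable_on {a..b}"
        using wint by (simp add: w_def)
    qed (fact X Xlip Gint G(2) V(1) gradVX t0 \<open>0 < e\<close>)+
    ultimately show "\<exists>d>0. \<forall>s1 s2. a \<le> s1 \<and> s1 \<le> s2 \<and> s2 \<le> b \<and> s2 - s1 < d \<and> (t0 = s1 \<or> t0 = s2) \<longrightarrow>
        \<bar>W s2 - W s1\<bar> \<le> e * (s2 - s1)"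
      by (metis (no_types, lifting))
  qed
  then obtain c where "\<And>t. t \<in> {a..b} \<Longrightarrow> W t = c"
    using has_derivative_zero_constant[of "{a..b}" W] by (auto simp: convex_real_interval)
  then have "W b = W a"
    using ab by auto
  then show "V (X b) - V (X a) = integral {a..b} w"
    by (simp add: W_def)
qed

lemma compact_coordinate_sphere:
  "compact (Pi UNIV (\<lambda>j. if j \<le> p then {-1..1::real} else {0}) \<inter> {c. (\<Sum>j\<le>p. (c j)^2) = 1})"
proof -
  have "compactin (product_topology (\<lambda>i. euclidean) UNIV)
      (PiE UNIV (\<lambda>j. if j \<le> p then {-1..1::real} else {0}))"
    by (subst compactin_PiE) auto
  then have "compact (Pi UNIV (\<lambda>j. if j \<le> p then {-1..1::real} else {0}))"
    by (simp add: euclidean_product_topology PiE_UNIV_domain)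
  then show ?thesis
    by (intro compact_Int_closed closed_Collect_eq continuous_intros continuous_on_product_coordinates)
qed

lemma coordinate_sphere_normalize:
  fixes c :: "nat \<Rightarrow> real" and G :: "nat \<Rightarrow> nat \<Rightarrow> real"
  assumes s: "s = (\<Sum>j\<le>p. (c j)^2)" "0 < s"
  obtains c' where "c' \<in> Pi UNIV (\<lambda>j. if j \<le> p then {-1..1::real} else {0}) \<inter> {c. (\<Sum>j\<le>p. (c j)^2) = 1}"
    and "(\<Sum>j\<le>p. \<Sum>l\<le>p. c' j * c' l * G j l) = (\<Sum>j\<le>p. \<Sum>l\<le>p. c j * c l * G j l) / s"
proof
  define c' where "c' j = (if j \<le> p then c j / sqrt s else 0)" for j
  have "c' j \<in> (if j \<le> p then {-1..1} else {0})" for j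
  proof (cases "j \<le> p")
    case True
    have "\<bar>c j\<bar> \<le> sqrt s"
      using abs_le_sqrt_sum_squares[where c = c and p = p and Q = s] True s(1) by simp
    then have "\<bar>c j / sqrt s\<bar> \<le> 1"
      using s(2) by (simp add: abs_divide)
    then show ?thesis
      using True abs_le_D1 abs_le_D2 by (fastforce simp: c'_def)
  qed (simp add: c'_def)
  moreover have "(\<Sum>j\<le>p. (c' j)^2) = 1"
    using s by (simp add: c'_def power_divide sum_divide_distrib[symmetric])
  ultimately show "c' \<in> Pi UNIV (\<lambda>j. if j \<le> p then {-1..1} else {0}) \<inter> {c. (\<Sum>j\<le>p. (c j)^2) = 1}"
    by blast
  have "c' j * c' l * G j l = c j * c l * G j l / s" if "j \<le> p" "l \<le> p" for j l
    using that s(2) by (simp add: c'_def field_simps real_sqrt_mult[symmetric])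
  then show "(\<Sum>j\<le>p. \<Sum>l\<le>p. c' j * c' l * G j l) = (\<Sum>j\<le>p. \<Sum>l\<le>p. c j * c l * G j l) / s"
    unfolding sum_divide_distrib by (auto intro!: sum.cong)
qed

text \<open>A positive definite quadratic form attains a positive minimum on the (compact) unit sphere.\<close>
lemma quadratic_form_coercive:
  fixes G :: "nat \<Rightarrow> nat \<Rightarrow> real" and p :: nat
  defines "Q \<equiv> \<lambda>c. \<Sum>j\<le>p. \<Sum>l\<le>p. c j * c l * G j l"
  assumes pos: "\<And>c. (\<Sum>j\<le>p. (c j)^2) \<noteq> 0 \<Longrightarrow> 0 < Q c"
  shows "\<exists>m>0. \<forall>c. m * (\<Sum>j\<le>p. (c j)^2) \<le> Q c"
proof -
  define S where "S = Pi UNIV (\<lambda>j. if j \<le> p then {-1..1::real} else {0}) \<inter> {c. (\<Sum>j\<le>p. (c j)^2) = 1}"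
  have "compact S"
    unfolding S_def by (rule compact_coordinate_sphere)
  moreover have "(\<lambda>j. if j = 0 then 1 else 0) \<in> S"
  proof -
    have "(\<Sum>j\<le>p. (if j = 0 then 1 else 0::real)^2) = (\<Sum>j\<le>p. if j = 0 then 1 else 0)"
      by (intro sum.cong) auto
    then show ?thesis by (auto simp: S_def)
  qed
  moreover have "continuous_on UNIV Q"
    unfolding Q_def by (intro continuous_intros continuous_on_product_coordinates)
  then have "continuous_on S Q"
    by (rule continuous_on_subset) simp
  ultimately obtain c0 where c0: "c0 \<in> S" "\<And>c. c \<in> S \<Longrightarrow> Q c0 \<le> Q c"
    using continuous_attains_inf[of S Q] by blast
  have "0 < Q c0"
    using c0(1) pos by (simp add: S_def)
  moreover have "Q c0 * (\<Sum>j\<le>p. (c j)^2) \<le> Q c" for c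
  proof (cases "(\<Sum>j\<le>p. (c j)^2) = 0")
    case True
    then have "c j = 0" if "j \<le> p" for j
      using that by (simp add: sum_nonneg_eq_0_iff)
    then show ?thesis
      using True by (simp add: Q_def)
  next
    case False
    define s where "s = (\<Sum>j\<le>p. (c j)^2)"
    have s: "0 < s"
      using False sum_nonneg[of "{..p}" "\<lambda>j. (c j)^2"] by (simp add: s_def)
    obtain c' where "c' \<in> S" "Q c' = Q c / s"
      using coordinate_sphere_normalize[OF s_def s, of G] unfolding S_def Q_def by blast
    then have "s * Q c0 \<le> Q c"
      using c0(2)[of c'] s by (simp add: field_simps) (metis mult_left_mono less_imp_le)
    then show ?thesis
      by (simp add: s_def mult.commute)
  qed
  ultimately show ?thesis by blast
qed

lemma integral_gfun_square:
  assumes cont: "\<And>j. j \<le> p \<Longrightarrow> continuous_on {0..T} (\<phi> j)"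
  shows "integral {0..T} (\<lambda>\<tau>. (gfun p \<phi> c \<tau>)^2)
    = (\<Sum>j\<le>p. \<Sum>l\<le>p. c j * c l * integral {0..T} (\<lambda>\<tau>. \<phi> j \<tau> * \<phi> l \<tau>))"
proof -
  have int: "(\<lambda>\<tau>. a * (\<phi> j \<tau> * \<phi> l \<tau>)) integrable_on {0..T}" if "j \<le> p" "l \<le> p" for j l a
    using cont that by (intro integrable_continuous_interval continuous_intros) auto
  have "(\<lambda>\<tau>. (gfun p \<phi> c \<tau>)^2) = (\<lambda>\<tau>. \<Sum>j\<le>p. \<Sum>l\<le>p. c j * c l * (\<phi> j \<tau> * \<phi> l \<tau>))"
    unfolding gfun_def power2_eq_square sum_product by (simp add: algebra_simps)
  then have "integral {0..T} (\<lambda>\<tau>. (gfun p \<phi> c \<tau>)^2)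
      = (\<Sum>j\<le>p. integral {0..T} (\<lambda>\<tau>. \<Sum>l\<le>p. c j * c l * (\<phi> j \<tau> * \<phi> l \<tau>)))"
    by (simp only:) (rule integral_sum, auto intro!: integrable_sum int)
  also have "\<dots> = (\<Sum>j\<le>p. \<Sum>l\<le>p. c j * c l * integral {0..T} (\<lambda>\<tau>. \<phi> j \<tau> * \<phi> l \<tau>))"
    by (intro sum.cong refl, subst integral_sum) (auto intro!: int)
  finally show ?thesis .
qed

lemma gfun_gram_coercive:
  assumes cont: "\<And>j. j \<le> p \<Longrightarrow> continuous_on {0..T} (\<phi> j)"
    and T: "0 < T"
    and indep: "\<And>c. (\<forall>\<tau>\<in>{0..T}. gfun p \<phi> c \<tau> = 0) \<Longrightarrow> \<forall>j\<le>p. c j = 0"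
  shows "\<exists>m>0. \<forall>c. m * (\<Sum>j\<le>p. (c j)^2) \<le> integral {0..T} (\<lambda>\<tau>. (gfun p \<phi> c \<tau>)^2)"
proof -
  have gcont: "continuous_on {0..T} (\<lambda>\<tau>. (gfun p \<phi> c \<tau>)^2)" for c
    unfolding gfun_def by (intro continuous_intros cont) auto
  have pos: "0 < integral {0..T} (\<lambda>\<tau>. (gfun p \<phi> c \<tau>)^2)" if c: "(\<Sum>j\<le>p. (c j)^2) \<noteq> 0" for c
  proof -
    have "0 \<le> integral {0..T} (\<lambda>\<tau>. (gfun p \<phi> c \<tau>)^2)"
      by (intro integral_nonneg integrable_continuous_interval gcont) auto
    moreover have "integral {0..T} (\<lambda>\<tau>. (gfun p \<phi> c \<tau>)^2) \<noteq> 0"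
    proof
      assume "integral {0..T} (\<lambda>\<tau>. (gfun p \<phi> c \<tau>)^2) = 0"
      then have "((\<lambda>\<tau>. (gfun p \<phi> c \<tau>)^2) has_integral 0) (cbox 0 T)"
        using integrable_integral[OF integrable_continuous_interval[OF gcont[of c]]] by simp
      then have "(gfun p \<phi> c \<tau>)^2 = 0" if "\<tau> \<in> {0..T}" for \<tau>
        using has_integral_0_cbox_imp_0[of 0 T "\<lambda>\<tau>. (gfun p \<phi> c \<tau>)^2" \<tau>] gcont that T by simp
      then show False
        using indep[of c] c by simp
    qed
    ultimately show ?thesis
      by simp
  qed
  have "0 < (\<Sum>j\<le>p. \<Sum>l\<le>p. c j * c l * integral {0..T} (\<lambda>\<tau>. \<phi> j \<tau> * \<phi> l \<tau>))"
    if "(\<Sum>j\<le>p. (c j)^2) \<noteq> 0" for c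
    using pos[OF that] by (simp add: integral_gfun_square[where p = p and \<phi> = \<phi> and T = T, OF cont])
  then show ?thesis
    using quadratic_form_coercive by (simp add: integral_gfun_square[where p = p and \<phi> = \<phi> and T = T, OF cont])
qed

lemma constrained_least_squares_residual:
  fixes uh :: "real \<Rightarrow> real"
  assumes cont: "\<And>j. j \<le> p \<Longrightarrow> continuous_on {0..T} (\<phi> j)"
    and const: "c0 \<noteq> 0" "\<And>\<tau>. 0 \<le> \<tau> \<Longrightarrow> \<phi> 0 \<tau> = c0"
    and T: "0 \<le> T"
    and uh: "continuous_on {0..T} uh" "\<And>\<tau>. \<tau> \<in> {0..T} \<Longrightarrow> \<bar>uh \<tau>\<bar> \<le> B"
    and opt: "\<forall>c'. \<bar>gfun p \<phi> c' 0 - uh 0\<bar> \<le> \<delta> \<longrightarrow>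
       integral {0..T} (\<lambda>\<tau>. (gfun p \<phi> c \<tau> - uh \<tau>)^2) \<le> integral {0..T} (\<lambda>\<tau>. (gfun p \<phi> c' \<tau> - uh \<tau>)^2)"
    and \<delta>: "0 \<le> \<delta>"
  shows "integral {0..T} (\<lambda>\<tau>. (gfun p \<phi> c \<tau> - uh \<tau>)^2) \<le> 4 * T * B^2"
proof -
  have B: "0 \<le> B"
    using uh(2)[of 0] T by auto
  have gcont: "continuous_on {0..T} (gfun p \<phi> c')" for c'
    unfolding gfun_def by (intro continuous_intros cont) auto
  \<comment> \<open>The constant candidate \<open>uh 0\<close> is feasible and stays within \<open>2 * B\<close> of \<open>uh\<close>.\<close>
  define cs where "cs j = (if j = 0 then uh 0 / c0 else 0)" for j :: nat
  have gcs: "gfun p \<phi> cs \<tau> = uh 0" if "0 \<le> \<tau>" for \<tau>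
  proof -
    have "gfun p \<phi> cs \<tau> = (\<Sum>j\<le>p. if j = 0 then uh 0 / c0 * \<phi> 0 \<tau> else 0)"
      unfolding gfun_def cs_def by (intro sum.cong) auto
    then show ?thesis using const that by simp
  qed
  have "integral {0..T} (\<lambda>\<tau>. (gfun p \<phi> c \<tau> - uh \<tau>)^2) \<le> integral {0..T} (\<lambda>\<tau>. (gfun p \<phi> cs \<tau> - uh \<tau>)^2)"
    using opt \<delta> gcs[of 0] by simp
  also have "\<dots> \<le> integral {0..T} (\<lambda>\<tau>. 4 * B^2)"
  proof (rule integral_le)
    fix \<tau> assume \<tau>: "\<tau> \<in> {0..T}"
    have "\<bar>gfun p \<phi> cs \<tau> - uh \<tau>\<bar> \<le> 2 * B"
      using gcs[of \<tau>] \<tau> uh(2)[OF \<tau>] uh(2)[of 0] T by auto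
    then show "(gfun p \<phi> cs \<tau> - uh \<tau>)^2 \<le> 4 * B^2"
      using abs_le_square_iff[of "gfun p \<phi> cs \<tau> - uh \<tau>" "2 * B"] B by (simp add: power_mult_distrib)
  qed (intro integrable_continuous_interval continuous_intros gcont uh(1))+
  finally show ?thesis
    using T by simp
qed

lemma constrained_least_squares_bound:
  fixes uh :: "real \<Rightarrow> real"
  assumes gram: "0 < m" "\<And>c. m * (\<Sum>j\<le>p. (c j)^2) \<le> integral {0..T} (\<lambda>\<tau>. (gfun p \<phi> c \<tau>)^2)"
    and cont: "\<And>j. j \<le> p \<Longrightarrow> continuous_on {0..T} (\<phi> j)"
    and const: "c0 \<noteq> 0" "\<And>\<tau>. 0 \<le> \<tau> \<Longrightarrow> \<phi> 0 \<tau> = c0"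
    and T: "0 \<le> T"
    and uh: "continuous_on {0..T} uh" "\<And>\<tau>. \<tau> \<in> {0..T} \<Longrightarrow> \<bar>uh \<tau>\<bar> \<le> B"
    and opt: "\<forall>c'. \<bar>gfun p \<phi> c' 0 - uh 0\<bar> \<le> \<delta> \<longrightarrow>
       integral {0..T} (\<lambda>\<tau>. (gfun p \<phi> c \<tau> - uh \<tau>)^2) \<le> integral {0..T} (\<lambda>\<tau>. (gfun p \<phi> c' \<tau> - uh \<tau>)^2)"
    and \<delta>: "0 \<le> \<delta>"
  shows "(\<Sum>j\<le>p. (c j)^2) \<le> 10 * T * B^2 / m"
proof -
  define r where "r = (\<lambda>\<tau>. 2 * (gfun p \<phi> c \<tau> - uh \<tau>)^2)"
  have gcont: "continuous_on {0..T} (gfun p \<phi> c)"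
    unfolding gfun_def by (intro continuous_intros cont) auto
  have r: "r integrable_on {0..T}"
    unfolding r_def by (intro integrable_continuous_interval continuous_intros gcont uh(1))
  have "m * (\<Sum>j\<le>p. (c j)^2) \<le> integral {0..T} (\<lambda>\<tau>. r \<tau> + 2 * B^2)"
  proof (rule order_trans[OF gram(2) integral_le])
    fix \<tau> assume \<tau>: "\<tau> \<in> {0..T}"
    have "(gfun p \<phi> c \<tau>)^2 \<le> 2 * (gfun p \<phi> c \<tau> - uh \<tau>)^2 + 2 * (uh \<tau>)^2"
      using zero_le_power2[of "gfun p \<phi> c \<tau> - 2 * uh \<tau>"] by (simp add: power2_eq_square algebra_simps)
    moreover have "(uh \<tau>)^2 \<le> B^2"
      using uh(2)[OF \<tau>] by (metis abs_le_square_iff abs_of_nonneg abs_ge_zero order_trans)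
    ultimately show "(gfun p \<phi> c \<tau>)^2 \<le> r \<tau> + 2 * B^2"
      by (simp add: r_def)
  qed (intro integrable_continuous_interval continuous_intros gcont uh(1) integrable_add r
      integrable_const_ivl)+
  also have "\<dots> = 2 * integral {0..T} (\<lambda>\<tau>. (gfun p \<phi> c \<tau> - uh \<tau>)^2) + 2 * B^2 * T"
    using integral_add[OF r integrable_const_ivl[of "2 * B^2" 0 T]] T by (simp add: r_def)
  also have "\<dots> \<le> 10 * T * B^2"
    using constrained_least_squares_residual[OF cont const T uh opt \<delta>] by simp
  finally show ?thesis
    using gram(1) by (simp add: field_simps mult.commute)
qed

lemma C1_increment_bound:
  fixes \<psi> \<psi>' :: "real \<Rightarrow> real"
  assumes "continuous_on {0..} \<psi>'" "\<And>\<tau>. 0 \<le> \<tau> \<Longrightarrow> (\<psi> has_real_derivative \<psi>' \<tau>) (at \<tau> within {0..})"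
  shows "\<exists>L. \<forall>h\<in>{0..T}. \<bar>\<psi> h - \<psi> 0\<bar> \<le> L * h"
proof -
  have "bounded (\<psi>' ` {0..T})"
    by (intro compact_imp_bounded compact_continuous_image compact_Icc continuous_on_subset[OF assms(1)]) auto
  then obtain L where "\<forall>y\<in>\<psi>' ` {0..T}. norm y \<le> L"
    by (auto simp: bounded_iff)
  then have L: "\<And>\<tau>. \<tau> \<in> {0..T} \<Longrightarrow> \<bar>\<psi>' \<tau>\<bar> \<le> L"
    by force
  have "\<bar>\<psi> h - \<psi> 0\<bar> \<le> L * h" if h: "h \<in> {0..T}" for h
  proof -
    have "\<exists>\<xi>\<in>{0..h}. \<psi> h - \<psi> 0 = (\<lambda>y. \<psi>' \<xi> * y) (h - 0)"
    proof (rule mvt_very_simple)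
      fix \<xi> assume "0 \<le> \<xi>" "\<xi> \<le> h"
      then have "(\<psi> has_real_derivative \<psi>' \<xi>) (at \<xi> within {0..h})"
        by (intro DERIV_subset[OF assms(2)]) auto
      then show "(\<psi> has_derivative (\<lambda>y. \<psi>' \<xi> * y)) (at \<xi> within {0..h})"
        by (simp add: has_field_derivative_def)
    qed (use h in auto)
    then obtain \<xi> where "\<xi> \<in> {0..h}" "\<psi> h - \<psi> 0 = \<psi>' \<xi> * h"
      by auto
    moreover have "\<bar>\<psi>' \<xi>\<bar> \<le> L"
      using \<open>\<xi> \<in> {0..h}\<close> h by (intro L) auto
    ultimately show ?thesis
      using h by (simp add: abs_mult mult_right_mono)
  qed
  then show ?thesis by blast
qed

locale event_triggered_system =
  fixes f :: "real^'n \<Rightarrow> real^'m \<Rightarrow> real^'q \<Rightarrow> real^'n"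
    and \<gamma> :: "real^'n \<Rightarrow> real^'m"
    and V :: "real^'n \<Rightarrow> real"
    and gradV :: "real^'n \<Rightarrow> real^'n"
    and \<alpha>1 \<alpha>2 \<alpha>3 \<rho>1 \<rho>2 :: "real \<Rightarrow> real"
    and D T \<sigma> r :: real
    and p :: nat
    and \<phi> :: "nat \<Rightarrow> real \<Rightarrow> real"
  assumes A1_V: "\<And>z. (V has_derivative (\<lambda>h. gradV z \<bullet> h)) (at z)"
    and A1_C1: "continuous_on UNIV gradV"
    and A1_K: "class_Kinf \<alpha>1" "class_Kinf \<alpha>2" "class_Kinf \<alpha>3" "class_Kinf \<rho>1" "class_Kinf \<rho>2"
    and A1_sandwich: "\<And>z. \<alpha>1 (norm z) \<le> V z \<and> V z \<le> \<alpha>2 (norm z)"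
    and A1_ISS: "\<And>z e w. gradV z \<bullet> f z (\<gamma> z + e) w
                     \<le> - \<alpha>3 (norm z) + \<rho>1 (norm e) + \<rho>2 (norm w)"
    and A2_f: "\<And>C. compact C \<Longrightarrow> \<exists>L. L-lipschitz_on C (\<lambda>(z, v, w). f z v w)"
    and A2_\<gamma>: "\<And>C. compact C \<Longrightarrow> \<exists>L. L-lipschitz_on C \<gamma>"
    and A2_0: "f 0 0 0 = 0" "\<gamma> 0 = 0"
    and A3: "D \<ge> 0"
    and A4_C1: "\<And>j. j \<le> p \<Longrightarrow> \<exists>\<phi>'. continuous_on {0..} \<phi>'
                    \<and> (\<forall>\<tau>\<ge>0. (\<phi> j has_real_derivative \<phi>' \<tau>) (at \<tau> within {0..}))"
    and A4_const: "\<exists>c. c \<noteq> 0 \<and> (\<forall>\<tau>\<ge>0. \<phi> 0 \<tau> = c)"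
    and A4_T: "T > 0"
    and A4_indep: "\<And>c. (\<forall>\<tau>\<in>{0..T}. gfun p \<phi> c \<tau> = 0) \<Longrightarrow> \<forall>j\<le>p. c j = 0"
    and \<sigma>: "0 < \<sigma>" "\<sigma> < 1"
    and r: "0 \<le> r"
begin

abbreviation eps :: real where "eps \<equiv> trig_eps \<alpha>2 \<alpha>3 \<rho>2 D \<sigma>"
definition eta :: "real \<Rightarrow> real"
  where "eta s = 1 / sqrt (real CARD('m)) * Kinv \<rho>1 (r * (\<sigma> / 2) * \<alpha>3 s)"
abbreviation \<kappa> :: real where "\<kappa> \<equiv> \<alpha>3 (Kinv \<alpha>2 eps)"

lemma eta_nonneg: "0 \<le> s \<Longrightarrow> 0 \<le> eta s"
  unfolding eta_def using r \<sigma> class_Kinf_nonneg[OF A1_K(3)] by (simp add: Kinv_nonneg[OF A1_K(4)])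

lemma eps_nonneg: "0 \<le> eps"
proof -
  have "0 \<le> 2 * \<rho>2 D / \<sigma>"
    using class_Kinf_nonneg[OF A1_K(5) A3] \<sigma> by simp
  then show ?thesis
    unfolding trig_eps_def by (intro class_Kinf_nonneg[OF A1_K(2)] Kinv_nonneg[OF A1_K(3)])
qed

lemma kappa_nonneg: "0 \<le> \<kappa>"
  by (intro class_Kinf_nonneg[OF A1_K(3)] Kinv_nonneg[OF A1_K(2) eps_nonneg])

lemma norm_le_Kinv_\<alpha>1:
  assumes "V z \<le> c"
  shows "norm z \<le> Kinv \<alpha>1 c"
proof -
  have "0 \<le> c"
    using A1_sandwich[of z] class_Kinf_nonneg[OF A1_K(1) norm_ge_zero] assms by (meson order_trans)
  then show ?thesis
    using le_Kinv_iff[OF A1_K(1) norm_ge_zero] A1_sandwich[of z] assms by (meson order_trans)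
qed

lemma outside_sublevel_set:
  assumes "eps \<le> V z"
  shows "2 * \<rho>2 D / \<sigma> \<le> \<alpha>3 (norm z)" "Kinv \<alpha>2 eps \<le> norm z" "\<kappa> \<le> \<alpha>3 (norm z)"
proof -
  have q: "0 \<le> 2 * \<rho>2 D / \<sigma>"
    using class_Kinf_nonneg[OF A1_K(5) A3] \<sigma> by simp
  have \<alpha>2: "eps \<le> \<alpha>2 (norm z)"
    using assms A1_sandwich[of z] by linarith
  then show "2 * \<rho>2 D / \<sigma> \<le> \<alpha>3 (norm z)"
    unfolding trig_eps_def
    by (simp add: class_Kinf_le_iff[OF A1_K(2) Kinv_nonneg[OF A1_K(3) q]] Kinv_le_iff[OF A1_K(3) _ q])
  show "Kinv \<alpha>2 eps \<le> norm z"
    using Kinv_le_iff[OF A1_K(2) norm_ge_zero[of z] eps_nonneg] \<alpha>2 by simp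
  then show "\<kappa> \<le> \<alpha>3 (norm z)"
    using class_Kinf_le_iff[OF A1_K(3) Kinv_nonneg[OF A1_K(2) eps_nonneg] norm_ge_zero[of z]] by simp
qed

lemma decrease_outside_sublevel_set:
  assumes "eps \<le> V z" "\<rho>1 (norm e) < \<sigma> / 2 * \<alpha>3 (norm z)" "norm w \<le> D"
  shows "gradV z \<bullet> f z (\<gamma> z + e) w \<le> - (1 - \<sigma>) * \<kappa>"
proof -
  have "\<rho>2 (norm w) \<le> \<rho>2 D"
    using class_Kinf_le_iff[OF A1_K(5) norm_ge_zero[of w] A3] assms(3) by simp
  moreover have "\<rho>2 D \<le> \<sigma> / 2 * \<alpha>3 (norm z)"
    using outside_sublevel_set(1)[OF assms(1)] \<sigma> by (simp add: field_simps)
  ultimately have "gradV z \<bullet> f z (\<gamma> z + e) w \<le> - (1 - \<sigma>) * \<alpha>3 (norm z)"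
    using A1_ISS[of z e w] assms(2) by (simp add: algebra_simps)
  also have "\<dots> \<le> - (1 - \<sigma>) * \<kappa>"
    using outside_sublevel_set(3)[OF assms(1)] \<sigma> by (simp add: mult_left_mono)
  finally show ?thesis .
qed

lemma nominal_decrease: "gradV z \<bullet> f z (\<gamma> z) 0 \<le> 0"
  using A1_ISS[of z 0 0] class_Kinf_zero[OF A1_K(4)] class_Kinf_zero[OF A1_K(5)]
    class_Kinf_nonneg[OF A1_K(3) norm_ge_zero[of z]] by simp

lemma V_continuous_on: "continuous_on S V"
  using A1_V by (meson has_derivative_continuous continuous_at_imp_continuous_on)

lemma \<phi>_continuous_on:
  assumes "j \<le> p"
  shows "continuous_on {0..} (\<phi> j)"
proof -
  obtain \<phi>' where "\<forall>\<tau>\<ge>0. (\<phi> j has_real_derivative \<phi>' \<tau>) (at \<tau> within {0..})"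
    using A4_C1[OF assms] by blast
  then show ?thesis
    unfolding continuous_on_eq_continuous_within by (auto intro: DERIV_continuous)
qed

lemma f_bounded_on_balls:
  "\<exists>M. \<forall>z v w. norm z \<le> R \<and> norm v \<le> U \<and> norm w \<le> D \<longrightarrow> norm (f z v w) \<le> M"
proof -
  define S where "S = cball (0::real^'n) R \<times> cball (0::real^'m) U \<times> cball (0::real^'q) D"
  have "compact S"
    unfolding S_def by (intro compact_Times compact_cball)
  moreover obtain L where "L-lipschitz_on S (\<lambda>(z, v, w). f z v w)"
    using A2_f[OF \<open>compact S\<close>] by blast
  ultimately have "bounded ((\<lambda>(z, v, w). f z v w) ` S)"
    by (intro compact_imp_bounded compact_continuous_image lipschitz_on_continuous_on)
  then obtain M where "\<And>y. y \<in> (\<lambda>(z, v, w). f z v w) ` S \<Longrightarrow> norm y \<le> M"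
    by (auto simp: bounded_iff)
  then show ?thesis
    by (intro exI[of _ M]) (force simp: S_def)
qed

definition gram_const :: real where
  "gram_const = (SOME m. 0 < m \<and> (\<forall>c. m * (\<Sum>j\<le>p. (c j)^2) \<le> integral {0..T} (\<lambda>\<tau>. (gfun p \<phi> c \<tau>)^2)))"

lemma gram_const: "0 < gram_const"
  "\<And>c. gram_const * (\<Sum>j\<le>p. (c j)^2) \<le> integral {0..T} (\<lambda>\<tau>. (gfun p \<phi> c \<tau>)^2)"
proof -
  have "\<exists>m>0. \<forall>c. m * (\<Sum>j\<le>p. (c j)^2) \<le> integral {0..T} (\<lambda>\<tau>. (gfun p \<phi> c \<tau>)^2)"
    by (rule gfun_gram_coercive[OF continuous_on_subset[OF \<phi>_continuous_on] A4_T A4_indep]) auto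
  then have "0 < gram_const \<and>
      (\<forall>c. gram_const * (\<Sum>j\<le>p. (c j)^2) \<le> integral {0..T} (\<lambda>\<tau>. (gfun p \<phi> c \<tau>)^2))"
    unfolding gram_const_def by (rule someI_ex)
  then show "0 < gram_const"
      "\<And>c. gram_const * (\<Sum>j\<le>p. (c j)^2) \<le> integral {0..T} (\<lambda>\<tau>. (gfun p \<phi> c \<tau>)^2)"
    by auto
qed

definition basis_bound :: real where
  "basis_bound = (SOME P. \<forall>\<tau>\<in>{0..T}. (\<Sum>j\<le>p. \<bar>\<phi> j \<tau>\<bar>) \<le> P)"

lemma basis_bound: "\<tau> \<in> {0..T} \<Longrightarrow> (\<Sum>j\<le>p. \<bar>\<phi> j \<tau>\<bar>) \<le> basis_bound"
proof -
  have "continuous_on {0..T} (\<lambda>\<tau>. \<Sum>j\<le>p. \<bar>\<phi> j \<tau>\<bar>)"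
    by (intro continuous_intros continuous_on_subset[OF \<phi>_continuous_on]) auto
  then have "bounded ((\<lambda>\<tau>. \<Sum>j\<le>p. \<bar>\<phi> j \<tau>\<bar>) ` {0..T})"
    by (intro compact_imp_bounded compact_continuous_image compact_Icc)
  then have "\<exists>P. \<forall>\<tau>\<in>{0..T}. (\<Sum>j\<le>p. \<bar>\<phi> j \<tau>\<bar>) \<le> P"
    by (auto simp: bounded_iff)
  then have "\<forall>\<tau>\<in>{0..T}. (\<Sum>j\<le>p. \<bar>\<phi> j \<tau>\<bar>) \<le> basis_bound"
    unfolding basis_bound_def by (rule someI_ex)
  then show "\<tau> \<in> {0..T} \<Longrightarrow> (\<Sum>j\<le>p. \<bar>\<phi> j \<tau>\<bar>) \<le> basis_bound"
    by blast
qed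

lemma basis_bound_nonneg: "0 \<le> basis_bound"
proof -
  have "0 \<le> (\<Sum>j\<le>p. \<bar>\<phi> j 0\<bar>)"
    by (intro sum_nonneg) simp
  moreover have "(\<Sum>j\<le>p. \<bar>\<phi> j 0\<bar>) \<le> basis_bound"
    using A4_T by (intro basis_bound) simp
  ultimately show ?thesis
    by linarith
qed

definition basis_lip :: real where
  "basis_lip = (SOME \<Lambda>. \<forall>h\<in>{0..T}. (\<Sum>j\<le>p. \<bar>\<phi> j h - \<phi> j 0\<bar>) \<le> \<Lambda> * h)"

lemma basis_lip: "h \<in> {0..T} \<Longrightarrow> (\<Sum>j\<le>p. \<bar>\<phi> j h - \<phi> j 0\<bar>) \<le> basis_lip * h"
proof -
  have "\<forall>j\<in>{..p}. \<exists>L. \<forall>h\<in>{0..T}. \<bar>\<phi> j h - \<phi> j 0\<bar> \<le> L * h"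
    using A4_C1 C1_increment_bound by (metis atMost_iff)
  then obtain L where L: "\<And>j h. j \<le> p \<Longrightarrow> h \<in> {0..T} \<Longrightarrow> \<bar>\<phi> j h - \<phi> j 0\<bar> \<le> L j * h"
    by (metis atMost_iff bchoice)
  have "\<forall>h\<in>{0..T}. (\<Sum>j\<le>p. \<bar>\<phi> j h - \<phi> j 0\<bar>) \<le> (\<Sum>j\<le>p. L j) * h"
    unfolding sum_distrib_right using L by (intro ballI sum_mono) auto
  then have "\<forall>h\<in>{0..T}. (\<Sum>j\<le>p. \<bar>\<phi> j h - \<phi> j 0\<bar>) \<le> basis_lip * h"
    unfolding basis_lip_def by (rule someI)
  then show "h \<in> {0..T} \<Longrightarrow> (\<Sum>j\<le>p. \<bar>\<phi> j h - \<phi> j 0\<bar>) \<le> basis_lip * h"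
    by blast
qed

lemma basis_lip_nonneg: "0 \<le> basis_lip"
proof -
  have "0 \<le> (\<Sum>j\<le>p. \<bar>\<phi> j T - \<phi> j 0\<bar>)"
    by (intro sum_nonneg) simp
  moreover have "(\<Sum>j\<le>p. \<bar>\<phi> j T - \<phi> j 0\<bar>) \<le> basis_lip * T"
    using A4_T by (intro basis_lip) simp
  ultimately have "0 \<le> basis_lip * T"
    by linarith
  then show ?thesis
    using A4_T by (simp add: zero_le_mult_iff)
qed

definition \<gamma>_lip :: "real \<Rightarrow> real" where
  "\<gamma>_lip R = (SOME L. L-lipschitz_on (cball 0 R) \<gamma>)"

lemma \<gamma>_lip: "(\<gamma>_lip R)-lipschitz_on (cball 0 R) \<gamma>"
  using someI_ex[OF A2_\<gamma>[OF compact_cball]] unfolding \<gamma>_lip_def .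

lemma norm_\<gamma>_le:
  assumes "norm z \<le> R"
  shows "norm (\<gamma> z) \<le> \<gamma>_lip R * R"
proof -
  have "norm (\<gamma> z) \<le> \<gamma>_lip R * norm z"
    using lipschitz_onD[OF \<gamma>_lip, of z R 0] A2_0(2) assms norm_ge_zero[of z] by simp
  also have "\<dots> \<le> \<gamma>_lip R * R"
    using assms lipschitz_on_nonneg[OF \<gamma>_lip] by (rule mult_left_mono)
  finally show ?thesis .
qed

definition f_bound :: "real \<Rightarrow> real \<Rightarrow> real" where
  "f_bound R U = (SOME M. \<forall>z v w. norm z \<le> R \<and> norm v \<le> U \<and> norm w \<le> D \<longrightarrow> norm (f z v w) \<le> M)"

lemma f_bound:
  assumes "norm z \<le> R" "norm v \<le> U" "norm w \<le> D"
  shows "norm (f z v w) \<le> f_bound R U"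
proof -
  have "\<forall>z v w. norm z \<le> R \<and> norm v \<le> U \<and> norm w \<le> D \<longrightarrow> norm (f z v w) \<le> f_bound R U"
    unfolding f_bound_def by (rule someI_ex[OF f_bounded_on_balls])
  then show ?thesis
    using assms by blast
qed

lemma f_bound_nonneg:
  assumes "0 \<le> R" "0 \<le> U"
  shows "0 \<le> f_bound R U"
proof -
  have "norm (f 0 0 0) \<le> f_bound R U"
    using assms A3 by (intro f_bound) auto
  then show ?thesis
    using norm_ge_zero order_trans by blast
qed

definition state_bound :: "real^'n \<Rightarrow> real" where
  "state_bound x0 = Kinv \<alpha>1 (max eps (V x0))"

definition coef_bound :: "real^'n \<Rightarrow> real" where
  "coef_bound x0 = sqrt (10 * T * (\<gamma>_lip (state_bound x0) * state_bound x0)^2 / gram_const)"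

definition input_bound :: "real^'n \<Rightarrow> real" where
  "input_bound x0 = real CARD('m) * (real (Suc p) * coef_bound x0 * basis_bound)"

definition error_rate :: "real^'n \<Rightarrow> real" where
  "error_rate x0 = real CARD('m) * (real (Suc p) * coef_bound x0 * basis_lip)
     + \<gamma>_lip (state_bound x0) * f_bound (state_bound x0) (input_bound x0)"

definition error_init :: "real^'n \<Rightarrow> real" where
  "error_init x0 = Kinv \<rho>1 (r * (\<sigma> / 2) * \<alpha>3 (state_bound x0))"

abbreviation error_trigger :: real where
  "error_trigger \<equiv> Kinv \<rho>1 (\<sigma> / 2 * \<kappa>)"

text \<open>The estimates on an inter-event interval only hold within the model horizon \<open>T\<close>; the \<open>+ 1\<close>
  avoids a division by zero.\<close>
definition dwell_time :: "real^'n \<Rightarrow> real" where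
  "dwell_time x0 = min T ((error_trigger - error_init x0) / (error_rate x0 + 1))"

definition settling_time :: "real \<Rightarrow> real" where
  "settling_time b = max 0 ((\<alpha>2 b - eps) / ((1 - \<sigma>) * \<kappa>))"

lemma state_bound_nonneg: "0 \<le> state_bound x0"
  unfolding state_bound_def using Kinv_nonneg[OF A1_K(1)] eps_nonneg by simp

lemma coef_bound_nonneg: "0 \<le> coef_bound x0"
  unfolding coef_bound_def using A4_T gram_const(1) by simp

lemma input_bound_nonneg: "0 \<le> input_bound x0"
  unfolding input_bound_def using coef_bound_nonneg basis_bound_nonneg by simp

lemma error_rate_nonneg: "0 \<le> error_rate x0"
  unfolding error_rate_def
  using coef_bound_nonneg basis_lip_nonneg lipschitz_on_nonneg[OF \<gamma>_lip]
    f_bound_nonneg[OF state_bound_nonneg input_bound_nonneg] by simp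

lemma below_r_bound:
  assumes "r < r_bound \<alpha>1 \<alpha>2 \<alpha>3 eps (V x0)"
  shows "0 < eps" "error_init x0 < error_trigger" "0 < dwell_time x0"
proof -
  show eps: "0 < eps"
  proof (rule ccontr)
    assume "\<not> 0 < eps"
    then have "r_bound \<alpha>1 \<alpha>2 \<alpha>3 eps (V x0) = 0"
      using eps_nonneg by (simp add: r_bound_def Kinv_zero[OF A1_K(2)] class_Kinf_zero[OF A1_K(3)])
    then show False using assms r by simp
  qed
  have "0 < \<alpha>3 (state_bound x0)"
    unfolding state_bound_def using eps by (intro class_Kinf_pos[OF A1_K(3)] Kinv_pos[OF A1_K(1)]) simp
  moreover have "r < \<kappa> / \<alpha>3 (state_bound x0)"
    using assms by (simp add: r_bound_def state_bound_def)
  ultimately have "r * (\<sigma> / 2) * \<alpha>3 (state_bound x0) < \<sigma> / 2 * \<kappa>"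
    using \<sigma> by (simp add: pos_less_divide_eq mult.commute mult.left_commute)
  moreover have "0 \<le> r * (\<sigma> / 2) * \<alpha>3 (state_bound x0)"
    using r \<sigma> class_Kinf_nonneg[OF A1_K(3) state_bound_nonneg] by simp
  ultimately show "error_init x0 < error_trigger"
    unfolding error_init_def using Kinv_mono_iff(2)[OF A1_K(4)] by simp
  then show "0 < dwell_time x0"
    unfolding dwell_time_def using A4_T error_rate_nonneg[of x0] by simp
qed

context
  fixes d :: "real \<Rightarrow> real^'q" and x :: "real \<Rightarrow> real^'n" and u :: "real \<Rightarrow> real^'m"
    and te :: "nat \<Rightarrow> ereal" and a :: "nat \<Rightarrow> 'm \<Rightarrow> nat \<Rightarrow> real"
    and xh :: "nat \<Rightarrow> real \<Rightarrow> real^'n"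
  assumes sol: "closed_loop_solution f \<gamma> V \<alpha>2 \<alpha>3 \<rho>1 \<rho>2 D p \<phi> T \<sigma> r d x u te a xh"
begin

abbreviation t_max :: ereal where "t_max \<equiv> (SUP k. te k)"
abbreviation tk :: "nat \<Rightarrow> real" where "tk k \<equiv> real_of_ereal (te k)"
abbreviation Uk :: "nat \<Rightarrow> real \<Rightarrow> real^'m" where "Uk k t \<equiv> \<chi> i. gfun p \<phi> (a k i) (t - tk k)"
abbreviation xdot :: "real \<Rightarrow> real^'n" where "xdot \<equiv> \<lambda>s. f (x s) (u s) (d s)"

lemma disturbance_bounded: "0 \<le> t \<Longrightarrow> norm (d t) \<le> D"
  using sol unfolding closed_loop_solution_def Let_def by blast

lemma te_0: "te 0 = 0"
  using sol unfolding closed_loop_solution_def Let_def by blast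

lemma te_less_Suc: "te k < \<infinity> \<Longrightarrow> te k < te (Suc k)"
  using sol unfolding closed_loop_solution_def Let_def by blast

lemma te_Suc_infinity: "te k = \<infinity> \<Longrightarrow> te (Suc k) = \<infinity>"
  using sol unfolding closed_loop_solution_def Let_def by blast

lemma u_eq_Uk: "te k \<le> ereal t \<Longrightarrow> ereal t < te (Suc k) \<Longrightarrow> u t = Uk k t"
  using sol unfolding closed_loop_solution_def Let_def by blast

lemma state_eq_integral:
  assumes "0 \<le> t" "ereal t < t_max"
  shows "xdot absolutely_integrable_on {0..t}" "x t = x 0 + integral {0..t} xdot"
  using sol assms unfolding closed_loop_solution_def Let_def by blast+

lemma
  assumes "te k < \<infinity>"
  shows model_init: "xh k 0 = x (tk k)"
    and model_deriv: "\<And>\<tau>. \<tau> \<in> {0..T} \<Longrightarrow>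
          (xh k has_vector_derivative f (xh k \<tau>) (\<gamma> (xh k \<tau>)) 0) (at \<tau> within {0..T})"
    and coef_feasible: "\<bar>gfun p \<phi> (a k i) 0 - \<gamma> (xh k 0) $ i\<bar> \<le> eta (norm (xh k 0))"
    and coef_optimal: "\<forall>c. \<bar>gfun p \<phi> c 0 - \<gamma> (xh k 0) $ i\<bar> \<le> eta (norm (xh k 0)) \<longrightarrow>
              integral {0..T} (\<lambda>\<tau>. (gfun p \<phi> (a k i) \<tau> - \<gamma> (xh k \<tau>) $ i)\<^sup>2)
              \<le> integral {0..T} (\<lambda>\<tau>. (gfun p \<phi> c \<tau> - \<gamma> (xh k \<tau>) $ i)\<^sup>2)"
    and not_triggered: "\<And>t. tk k < t \<Longrightarrow> ereal t < te (Suc k) \<Longrightarrow>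
          \<not> (\<sigma> / 2 * \<alpha>3 (norm (x t)) \<le> \<rho>1 (norm (Uk k t - \<gamma> (x t))) \<and> eps \<le> V (x t))"
    and triggered: "te (Suc k) < \<infinity> \<Longrightarrow>
          \<sigma> / 2 * \<alpha>3 (norm (x (tk (Suc k)))) \<le> \<rho>1 (norm (Uk k (tk (Suc k)) - \<gamma> (x (tk (Suc k)))))
          \<and> eps \<le> V (x (tk (Suc k)))"
  using sol assms unfolding closed_loop_solution_def Let_def eta_def by blast+

lemma te_nonneg: "0 \<le> te k"
proof (induction k)
  case (Suc k)
  then show ?case
    using te_less_Suc[of k] te_Suc_infinity[of k] by (cases "te k = \<infinity>") (auto simp: less_top)
qed (simp add: te_0)

lemma te_finite_Suc: "te (Suc k) < \<infinity> \<Longrightarrow> te k < \<infinity>"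
  using te_Suc_infinity[of k] by (cases "te k = \<infinity>") (auto simp: less_top)

lemma tk_less_Suc:
  assumes "te (Suc k) < \<infinity>"
  shows "tk k < tk (Suc k)"
  using te_less_Suc[OF te_finite_Suc[OF assms]] te_nonneg[of k] te_nonneg[of "Suc k"] assms
  by (cases "te k"; cases "te (Suc k)") auto

lemma te_eq_tk: "te k < \<infinity> \<Longrightarrow> te k = ereal (tk k)"
  using te_nonneg[of k] by (cases "te k") auto

lemma tk_nonneg: "0 \<le> tk k"
  using te_nonneg[of k] by (cases "te k") auto

lemma te_less_t_max: "te k < \<infinity> \<Longrightarrow> te k < t_max"
  using te_less_Suc[of k] by (meson SUP_upper UNIV_I less_le_trans)

lemma less_t_max_trans: "ereal s < t_max \<Longrightarrow> t \<le> s \<Longrightarrow> ereal t < t_max"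
  by (meson ereal_less_eq(3) le_less_trans)

lemma event_interval_cover:
  assumes "0 \<le> s" "ereal s < te K"
  shows "\<exists>k<K. te k \<le> ereal s \<and> ereal s < te (Suc k)"
  using assms(2)
proof (induction K)
  case (Suc K)
  then show ?case
    by (cases "te K \<le> ereal s") (auto simp: not_le less_Suc_eq)
qed (use assms(1) te_0 in simp)

lemma event_interval_cover_t_max:
  assumes "0 \<le> s" "ereal s < t_max"
  obtains k where "te k \<le> ereal s" "ereal s < te (Suc k)" "te k < \<infinity>" "tk k \<le> s"
proof -
  obtain K where "ereal s < te K"
    using assms(2) by (auto simp: less_SUP_iff)
  then obtain k where k: "te k \<le> ereal s" "ereal s < te (Suc k)"
    using event_interval_cover[OF assms(1)] by blast
  moreover have "te k < \<infinity>"
    using k(1) by (cases "te k") auto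
  ultimately show ?thesis
    using that te_eq_tk by (metis ereal_less_eq(3))
qed

lemma state_continuous_on:
  assumes "0 \<le> t" "ereal t < t_max"
  shows "continuous_on {0..t} x"
proof -
  have "xdot integrable_on {0..t}"
    using state_eq_integral(1)[OF assms] by (simp add: absolutely_integrable_on_def)
  then have "continuous_on {0..t} (\<lambda>s. x 0 + integral {0..s} xdot)"
    by (intro continuous_intros indefinite_integral_continuous_1)
  moreover have "x s = x 0 + integral {0..s} xdot" if "s \<in> {0..t}" for s
    using state_eq_integral(2)[of s] less_t_max_trans[OF assms(2)] that by auto
  ultimately show ?thesis
    using continuous_on_eq by (metis (no_types, lifting))
qed

lemma state_increment_eq_integral:
  assumes "0 \<le> s" "s \<le> t" "ereal t < t_max"
  shows "x t - x s = integral {s..t} xdot"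
proof -
  have "xdot integrable_on {0..t}"
    using state_eq_integral(1)[OF _ assms(3)] assms by (simp add: absolutely_integrable_on_def)
  then have "integral {0..t} xdot - integral {0..s} xdot = integral {s..t} xdot"
    using assms by (intro integral_interval_diff) auto
  then show ?thesis
    using state_eq_integral(2)[of t] state_eq_integral(2)[OF assms(1)] assms less_t_max_trans[OF assms(3)]
    by simp
qed

lemma input_bounded_on:
  assumes "0 \<le> t" "ereal t < t_max"
  shows "\<exists>U. \<forall>s\<in>{0..t}. norm (u s) \<le> U"
proof -
  obtain K where K: "ereal t < te K"
    using assms(2) by (auto simp: less_SUP_iff)
  define A where "A = (\<Sum>k<K. \<Sum>i\<in>UNIV. \<Sum>j\<le>p. \<bar>a k i j\<bar>)"
  have A: "(\<Sum>j\<le>p. \<bar>a k i j\<bar>) \<le> A" if "k < K" for k i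
  proof -
    have "(\<Sum>j\<le>p. \<bar>a k i j\<bar>) \<le> (\<Sum>i\<in>UNIV. \<Sum>j\<le>p. \<bar>a k i j\<bar>)"
      by (rule member_le_sum) (auto intro: sum_nonneg)
    also have "\<dots> \<le> A"
      unfolding A_def using that
      by (intro member_le_sum[of k "{..<K}" "\<lambda>k. \<Sum>i\<in>UNIV. \<Sum>j\<le>p. \<bar>a k i j\<bar>"])
         (auto intro!: sum_nonneg)
    finally show ?thesis .
  qed
  have "continuous_on {0..t} (\<lambda>\<tau>. \<Sum>j\<le>p. \<bar>\<phi> j \<tau>\<bar>)"
    by (intro continuous_intros continuous_on_subset[OF \<phi>_continuous_on]) auto
  then have "bounded ((\<lambda>\<tau>. \<Sum>j\<le>p. \<bar>\<phi> j \<tau>\<bar>) ` {0..t})"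
    by (intro compact_imp_bounded compact_continuous_image compact_Icc)
  then obtain P where "\<forall>y\<in>(\<lambda>\<tau>. \<Sum>j\<le>p. \<bar>\<phi> j \<tau>\<bar>) ` {0..t}. norm y \<le> P"
    by (auto simp: bounded_iff)
  then have P: "\<And>\<tau>. \<tau> \<in> {0..t} \<Longrightarrow> (\<Sum>j\<le>p. \<bar>\<phi> j \<tau>\<bar>) \<le> P"
    by force
  have "norm (u s) \<le> real CARD('m) * (A * P)" if s: "s \<in> {0..t}" for s
  proof -
    obtain k where k: "k < K" "te k \<le> ereal s" "ereal s < te (Suc k)"
      using event_interval_cover[of s K] s K by (meson atLeastAtMost_iff ereal_less_eq(3) le_less_trans)
    have "tk k \<le> s"
      using k(2) te_eq_tk[of k] by (cases "te k") auto
    then show ?thesis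
      using u_eq_Uk[OF k(2,3)] A[OF k(1)] P[of "s - tk k"] s tk_nonneg[of k]
      by (auto intro!: norm_gfun_vec_le)
  qed
  then show ?thesis by blast
qed

lemma xdot_bounded_on:
  assumes "0 \<le> t" "ereal t < t_max"
  shows "\<exists>M. \<forall>s\<in>{0..t}. norm (xdot s) \<le> M"
proof -
  have "bounded (x ` {0..t})"
    by (intro compact_imp_bounded compact_continuous_image state_continuous_on[OF assms] compact_Icc)
  then obtain R where R: "\<forall>s\<in>{0..t}. norm (x s) \<le> R"
    by (auto simp: bounded_iff)
  obtain U where U: "\<forall>s\<in>{0..t}. norm (u s) \<le> U"
    using input_bounded_on[OF assms] by blast
  have "norm (xdot s) \<le> f_bound R U" if "s \<in> {0..t}" for s
    using that R U by (intro f_bound disturbance_bounded) auto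
  then show ?thesis
    by blast
qed

lemma V_increment_eq_integral:
  assumes "0 \<le> s" "s \<le> t" "ereal t < t_max"
  shows "(\<lambda>r. gradV (x r) \<bullet> xdot r) absolutely_integrable_on {s..t}"
    and "V (x t) - V (x s) = integral {s..t} (\<lambda>r. gradV (x r) \<bullet> xdot r)"
proof -
  have t: "0 \<le> t"
    using assms by simp
  obtain M where M: "\<forall>r\<in>{0..t}. norm (xdot r) \<le> M"
    using xdot_bounded_on[OF t assms(3)] by blast
  have "x r = x s + integral {s..r} xdot" if "r \<in> {s..t}" for r
    using state_increment_eq_integral[of s r] that assms less_t_max_trans[OF assms(3)]
    by (simp add: algebra_simps)
  moreover have "xdot absolutely_integrable_on {s..t}"
    using assms by (intro absolutely_integrable_on_subinterval[OF state_eq_integral(1)[OF t assms(3)]]) auto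
  moreover have "\<And>r. r \<in> {s..t} \<Longrightarrow> norm (xdot r) \<le> M"
    using M assms(1) by simp
  ultimately show "(\<lambda>r. gradV (x r) \<bullet> xdot r) absolutely_integrable_on {s..t}"
      "V (x t) - V (x s) = integral {s..t} (\<lambda>r. gradV (x r) \<bullet> xdot r)"
    using chain_rule_indefinite_integral[OF assms(2), of x xdot M V gradV] A1_V A1_C1 by blast+
qed

lemma V_decrease_outside_sublevel_set:
  assumes "0 \<le> s" "s \<le> t" "ereal t < t_max" "\<forall>r\<in>{s<..t}. eps \<le> V (x r)"
  shows "V (x t) \<le> V (x s) - (1 - \<sigma>) * \<kappa> * (t - s)"
proof -
  define w where "w = (\<lambda>r. gradV (x r) \<bullet> xdot r)"
  have wint: "w integrable_on {s..t}"
    using V_increment_eq_integral(1)[OF assms(1-3)] by (simp add: w_def absolutely_integrable_on_def)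
  \<comment> \<open>Off the countable set of event times the trigger condition is false.\<close>
  define E where "E = insert s (range tk)"
  have "countable E"
    unfolding E_def by simp
  then have "negligible (\<Union>((\<lambda>y. {y}) ` E))"
    by (intro negligible_countable_Union) auto
  then have "negligible E"
    by simp
  have w_le: "w r \<le> - (1 - \<sigma>) * \<kappa>" if r: "r \<in> {s..t} - E" for r
  proof -
    have r0: "0 \<le> r" and "s < r" "\<And>k. r \<noteq> tk k"
      using r assms(1) by (auto simp: E_def)
    obtain k where k: "te k \<le> ereal r" "ereal r < te (Suc k)" "te k < \<infinity>" "tk k \<le> r"
      using event_interval_cover_t_max[OF r0 less_t_max_trans[OF assms(3)]] r by auto
    then have "tk k < r"
      using \<open>\<And>k. r \<noteq> tk k\<close>[of k] by linarith
    moreover have "eps \<le> V (x r)"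
      using assms(4) \<open>s < r\<close> r by auto
    ultimately have "\<rho>1 (norm (u r - \<gamma> (x r))) < \<sigma> / 2 * \<alpha>3 (norm (x r))"
      using not_triggered[OF k(3)] k(2) u_eq_Uk[OF k(1,2)] by fastforce
    then show ?thesis
      using decrease_outside_sublevel_set[OF \<open>eps \<le> V (x r)\<close> _ disturbance_bounded[OF r0]]
      by (fastforce simp: w_def)
  qed
  define w' where "w' r = (if r \<in> E then - (1 - \<sigma>) * \<kappa> else w r)" for r
  have "integral {s..t} w = integral {s..t} w'"
    by (rule integral_spike[OF \<open>negligible E\<close>]) (simp add: w'_def)
  also have "\<dots> \<le> integral {s..t} (\<lambda>_. - (1 - \<sigma>) * \<kappa>)"
  proof (rule integral_le)
    show "w' integrable_on {s..t}"
      by (rule integrable_spike[OF wint \<open>negligible E\<close>]) (simp add: w'_def)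
  qed (use w_le in \<open>auto simp: w'_def\<close>)
  finally have "integral {s..t} w \<le> integral {s..t} (\<lambda>_. - (1 - \<sigma>) * \<kappa>)" .
  then show ?thesis
    using V_increment_eq_integral(2)[OF assms(1-3)] assms(2) by (simp add: w_def algebra_simps)
qed

lemma sublevel_set_invariant:
  assumes "eps \<le> c" "0 \<le> t0" "t0 \<le> t" "ereal t < t_max" "V (x t0) \<le> c"
  shows "V (x t) \<le> c"
proof (rule ccontr)
  assume "\<not> V (x t) \<le> c"
  have "continuous_on {t0..t} x"
    using assms by (intro continuous_on_subset[OF state_continuous_on[OF _ assms(4)]]) auto
  then have "continuous_on {t0..t} (\<lambda>s. V (x s))"
    using continuous_on_compose2[OF V_continuous_on[of UNIV]] by auto
  define S where "S = {t0..t} \<inter> (\<lambda>s. V (x s)) -` {..c}"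
  have "closed S" "bdd_above S" "t0 \<in> S"
    unfolding S_def using assms \<open>continuous_on {t0..t} (\<lambda>s. V (x s))\<close>
    by (auto intro!: continuous_closed_preimage)
  \<comment> \<open>After the last time \<open>s0\<close> below the level, the decrease estimate applies.\<close>
  define s0 where "s0 = Sup S"
  have "s0 \<in> S"
    unfolding s0_def using closed_contains_Sup \<open>closed S\<close> \<open>bdd_above S\<close> \<open>t0 \<in> S\<close> by blast
  then have s0: "t0 \<le> s0" "s0 \<le> t" "V (x s0) \<le> c"
    by (auto simp: S_def)
  have "eps \<le> V (x s)" if "s \<in> {s0<..t}" for s
  proof (rule ccontr)
    assume "\<not> eps \<le> V (x s)"
    then have "s \<in> S"
      using that s0 assms(1) by (auto simp: S_def)
    then show False
      using cSup_upper[OF _ \<open>bdd_above S\<close>] that by (force simp: s0_def)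
  qed
  then have "V (x t) \<le> V (x s0) - (1 - \<sigma>) * \<kappa> * (t - s0)"
    using V_decrease_outside_sublevel_set[OF _ s0(2) assms(4)] s0 assms(2) by simp
  also have "\<dots> \<le> V (x s0)"
    using s0 \<sigma> kappa_nonneg by simp
  finally show False
    using s0(3) \<open>\<not> V (x t) \<le> c\<close> by simp
qed

lemma state_le_state_bound:
  assumes "0 \<le> t" "ereal t < t_max"
  shows "norm (x t) \<le> state_bound (x 0)"
  unfolding state_bound_def using sublevel_set_invariant[of "max eps (V (x 0))" 0 t] assms
  by (intro norm_le_Kinv_\<alpha>1) simp

lemma model_V_decreasing:
  assumes "te k < \<infinity>" "\<tau> \<in> {0..T}"
  shows "V (xh k \<tau>) \<le> V (xh k 0)"
proof -
  define F where "F s = f (xh k s) (\<gamma> (xh k s)) 0" for s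
  have "((\<lambda>s. V (xh k s)) has_derivative (\<lambda>h. gradV (xh k s) \<bullet> (h *\<^sub>R F s))) (at s within {0..\<tau>})"
    if "0 \<le> s" "s \<le> \<tau>" for s
  proof -
    have "(xh k has_vector_derivative F s) (at s within {0..T})"
      using model_deriv[OF assms(1), of s] that assms(2) by (simp add: F_def)
    then have "(xh k has_vector_derivative F s) (at s within {0..\<tau>})"
      by (rule has_vector_derivative_within_subset) (use assms(2) in auto)
    then have "(xh k has_derivative (\<lambda>h. h *\<^sub>R F s)) (at s within {0..\<tau>})"
      by (simp add: has_vector_derivative_def)
    from has_derivative_compose[OF this A1_V] show ?thesis
      by simp
  qed
  then have "\<exists>\<xi>\<in>{0..\<tau>}. V (xh k \<tau>) - V (xh k 0) = gradV (xh k \<xi>) \<bullet> ((\<tau> - 0) *\<^sub>R F \<xi>)"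
    using assms(2) by (intro mvt_very_simple) auto
  then obtain \<xi> where "V (xh k \<tau>) - V (xh k 0) = \<tau> * (gradV (xh k \<xi>) \<bullet> F \<xi>)"
    by auto
  moreover have "\<tau> * (gradV (xh k \<xi>) \<bullet> F \<xi>) \<le> 0"
    using assms(2) nominal_decrease by (intro mult_nonneg_nonpos) (auto simp: F_def)
  ultimately show ?thesis
    by simp
qed

lemma model_le_state_bound:
  assumes "te k < \<infinity>" "\<tau> \<in> {0..T}"
  shows "norm (xh k \<tau>) \<le> state_bound (x 0)"
proof -
  have "V (x (tk k)) \<le> max eps (V (x 0))"
    using sublevel_set_invariant[of "max eps (V (x 0))" 0 "tk k"] tk_nonneg te_less_t_max[OF assms(1)]
      te_eq_tk[OF assms(1)] by simp
  then show ?thesis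
    unfolding state_bound_def
    using model_V_decreasing[OF assms] model_init[OF assms(1)] by (intro norm_le_Kinv_\<alpha>1) simp
qed

lemma model_continuous_on: "te k < \<infinity> \<Longrightarrow> continuous_on {0..T} (xh k)"
  using model_deriv unfolding continuous_on_eq_continuous_within has_vector_derivative_def
  by (meson has_derivative_continuous)

lemma coef_le_coef_bound:
  assumes "te k < \<infinity>" "j \<le> p"
  shows "\<bar>a k i j\<bar> \<le> coef_bound (x 0)"
proof -
  define R where "R = state_bound (x 0)"
  have xh: "norm (xh k \<tau>) \<le> R" if "\<tau> \<in> {0..T}" for \<tau>
    using model_le_state_bound[OF assms(1) that] by (simp add: R_def)
  obtain c0 where c0: "c0 \<noteq> 0" "\<And>\<tau>. 0 \<le> \<tau> \<Longrightarrow> \<phi> 0 \<tau> = c0"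
    using A4_const by blast
  have "continuous_on {0..T} (\<lambda>\<tau>. \<gamma> (xh k \<tau>))"
    using xh by (intro continuous_on_compose2[OF lipschitz_on_continuous_on[OF \<gamma>_lip[of R]]
        model_continuous_on[OF assms(1)]]) auto
  then have "continuous_on {0..T} (\<lambda>\<tau>. \<gamma> (xh k \<tau>) $ i)"
    by (rule continuous_on_component)
  moreover have "\<bar>\<gamma> (xh k \<tau>) $ i\<bar> \<le> \<gamma>_lip R * R" if "\<tau> \<in> {0..T}" for \<tau>
    using component_le_norm_cart[of "\<gamma> (xh k \<tau>)" i] norm_\<gamma>_le[OF xh[OF that]] by simp
  ultimately have "(\<Sum>j\<le>p. (a k i j)^2) \<le> 10 * T * (\<gamma>_lip R * R)^2 / gram_const"
    using A4_T by (intro constrained_least_squares_bound[OF gram_const _ c0 _ _ _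
        coef_optimal[OF assms(1)] eta_nonneg[OF norm_ge_zero]] continuous_on_subset[OF \<phi>_continuous_on]) auto
  then show ?thesis
    unfolding coef_bound_def R_def by (rule abs_le_sqrt_sum_squares[OF _ assms(2)])
qed

lemma coef_sum_le:
  assumes "te k < \<infinity>"
  shows "(\<Sum>j\<le>p. \<bar>a k i j\<bar>) \<le> real (Suc p) * coef_bound (x 0)"
  using sum_bounded_above[of "{..p}" "\<lambda>j. \<bar>a k i j\<bar>"] coef_le_coef_bound[OF assms] by simp

lemma Uk_le_input_bound:
  assumes "te k < \<infinity>" "h \<in> {0..T}"
  shows "norm (Uk k (tk k + h)) \<le> input_bound (x 0)"
  unfolding input_bound_def using assms by (intro norm_gfun_vec_le coef_sum_le basis_bound) auto

lemma Uk_increment_le: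
  assumes "te k < \<infinity>" "h \<in> {0..T}"
  shows "norm (Uk k (tk k + h) - Uk k (tk k))
    \<le> real CARD('m) * (real (Suc p) * coef_bound (x 0) * basis_lip) * h"
proof -
  have "Uk k (tk k + h) - Uk k (tk k) = (\<chi> i. gfun p (\<lambda>j \<tau>. \<phi> j \<tau> - \<phi> j 0) (a k i) h)"
    by (vector gfun_def sum_subtractf right_diff_distrib)
  also have "norm \<dots> \<le> real CARD('m) * (real (Suc p) * coef_bound (x 0) * (basis_lip * h))"
    using assms by (intro norm_gfun_vec_le coef_sum_le basis_lip)
  finally show ?thesis
    by (simp add: mult.assoc)
qed

lemma state_increment_le:
  assumes "te (Suc k) < \<infinity>" "tk (Suc k) \<le> tk k + T"
  shows "norm (x (tk (Suc k)) - x (tk k))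
    \<le> f_bound (state_bound (x 0)) (input_bound (x 0)) * (tk (Suc k) - tk k)"
proof -
  have fin: "te k < \<infinity>"
    using te_finite_Suc[OF assms(1)] .
  obtain t0 t1 where t: "t0 = tk k" "t1 = tk (Suc k)"
    by blast
  have e: "te k = ereal t0" "te (Suc k) = ereal t1"
    unfolding t using te_eq_tk[OF fin] te_eq_tk[OF assms(1)] by simp_all
  have t01: "0 \<le> t0" "t0 \<le> t1" "ereal t1 < t_max"
    using tk_nonneg[of k] te_less_Suc[OF fin] te_less_t_max[OF assms(1)] by (auto simp: t[symmetric] e)
  have pieces: "xdot s = f (x s) (Uk k s) (d s)" if "s \<in> {t0..t1} - {t1}" for s
    using u_eq_Uk[of k s] that unfolding e by auto
  have int: "xdot integrable_on {0..t1}"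
    using state_eq_integral(1)[OF _ t01(3)] t01 by (simp add: absolutely_integrable_on_def)
  have "x t1 - x t0 = integral {t0..t1} xdot"
    using state_increment_eq_integral t01 by blast
  also have "\<dots> = integral {t0..t1} (\<lambda>s. f (x s) (Uk k s) (d s))"
    by (rule integral_spike[OF negligible_sing[of t1]]) (simp add: pieces)
  finally have eq: "x t1 - x t0 = integral {t0..t1} (\<lambda>s. f (x s) (Uk k s) (d s))" .
  have "xdot integrable_on {t0..t1}"
    using t01 by (intro integrable_subinterval_real[OF int]) auto
  then have "(\<lambda>s. f (x s) (Uk k s) (d s)) integrable_on {t0..t1}"
    by (rule integrable_spike[OF _ negligible_sing[of t1]]) (simp add: pieces)
  moreover have "norm (f (x s) (Uk k s) (d s)) \<le> f_bound (state_bound (x 0)) (input_bound (x 0))"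
    if s: "s \<in> {t0..t1}" for s
  proof (rule f_bound)
    show "norm (x s) \<le> state_bound (x 0)"
      using s t01 by (intro state_le_state_bound less_t_max_trans[OF t01(3)]) auto
    have "s - t0 \<in> {0..T}"
      using s assms(2) unfolding t by auto
    then show "norm (Uk k s) \<le> input_bound (x 0)"
      using Uk_le_input_bound[OF fin, of "s - t0"] unfolding t by simp
    show "norm (d s) \<le> D"
      using s t01 by (intro disturbance_bounded) auto
  qed
  ultimately have "norm (x t1 - x t0) \<le> f_bound (state_bound (x 0)) (input_bound (x 0)) * (t1 - t0)"
    unfolding eq by (rule norm_integral_le_length[OF _ t01(2)])
  then show ?thesis
    unfolding t .
qed

lemma error_at_event_le:
  assumes "te k < \<infinity>"
  shows "norm (Uk k (tk k) - \<gamma> (x (tk k))) \<le> error_init (x 0)"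
proof -
  have "\<bar>(Uk k (tk k) - \<gamma> (x (tk k))) $ i\<bar> \<le> eta (norm (x (tk k)))" for i
    using coef_feasible[OF assms, of i] model_init[OF assms] by simp
  then have "norm (Uk k (tk k) - \<gamma> (x (tk k))) \<le> sqrt (real CARD('m)) * eta (norm (x (tk k)))"
    by (rule norm_le_sqrt_card_mult)
  also have "\<dots> = Kinv \<rho>1 (r * (\<sigma> / 2) * \<alpha>3 (norm (x (tk k))))"
    by (simp add: eta_def)
  also have "\<dots> \<le> error_init (x 0)"
  proof -
    have "norm (x (tk k)) \<le> state_bound (x 0)"
      using tk_nonneg te_less_t_max[OF assms] te_eq_tk[OF assms] by (intro state_le_state_bound) auto
    then have "\<alpha>3 (norm (x (tk k))) \<le> \<alpha>3 (state_bound (x 0))"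
      using class_Kinf_le_iff[OF A1_K(3) norm_ge_zero[of "x (tk k)"] state_bound_nonneg[of "x 0"]] by simp
    then have "r * (\<sigma> / 2) * \<alpha>3 (norm (x (tk k))) \<le> r * (\<sigma> / 2) * \<alpha>3 (state_bound (x 0))"
      using r \<sigma> by (intro mult_left_mono) auto
    moreover have "0 \<le> r * (\<sigma> / 2) * \<alpha>3 (norm (x (tk k)))"
      using r \<sigma> class_Kinf_nonneg[OF A1_K(3) norm_ge_zero[of "x (tk k)"]] by simp
    ultimately show ?thesis
      unfolding error_init_def using Kinv_mono_iff(1)[OF A1_K(4)] by simp
  qed
  finally show ?thesis .
qed

lemma error_at_next_event_ge:
  assumes "te (Suc k) < \<infinity>"
  shows "error_trigger \<le> norm (Uk k (tk (Suc k)) - \<gamma> (x (tk (Suc k))))"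
proof -
  have fin: "te k < \<infinity>"
    using te_finite_Suc[OF assms] .
  note trig = triggered[OF fin assms]
  then have "\<kappa> \<le> \<alpha>3 (norm (x (tk (Suc k))))"
    using outside_sublevel_set(3) by blast
  then have "\<sigma> / 2 * \<kappa> \<le> \<rho>1 (norm (Uk k (tk (Suc k)) - \<gamma> (x (tk (Suc k)))))"
    using trig \<sigma> by (smt (verit) mult_left_mono half_gt_zero)
  moreover have "0 \<le> \<sigma> / 2 * \<kappa>"
    using \<sigma> kappa_nonneg by simp
  ultimately show ?thesis
    using Kinv_le_iff[OF A1_K(4) norm_ge_zero[of "Uk k (tk (Suc k)) - \<gamma> (x (tk (Suc k)))"]] by blast
qed

lemma error_increment_le:
  assumes "te (Suc k) < \<infinity>" "tk (Suc k) \<le> tk k + T"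
  shows "norm ((Uk k (tk (Suc k)) - \<gamma> (x (tk (Suc k)))) - (Uk k (tk k) - \<gamma> (x (tk k))))
    \<le> error_rate (x 0) * (tk (Suc k) - tk k)"
proof -
  define R U h where "R = state_bound (x 0)" and "U = input_bound (x 0)" and "h = tk (Suc k) - tk k"
  have fin: "te k < \<infinity>"
    using te_finite_Suc[OF assms(1)] .
  have h: "h \<in> {0..T}"
    using tk_less_Suc[OF assms(1)] assms(2) by (simp add: h_def)
  have "norm (x t) \<le> R" if "t \<in> {tk k, tk (Suc k)}" for t
    using that tk_nonneg te_less_t_max[OF fin] te_less_t_max[OF assms(1)] te_eq_tk[OF fin]
      te_eq_tk[OF assms(1)] by (auto simp: R_def intro!: state_le_state_bound)
  then have "norm (\<gamma> (x (tk (Suc k))) - \<gamma> (x (tk k))) \<le> \<gamma>_lip R * norm (x (tk (Suc k)) - x (tk k))"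
    using lipschitz_onD[OF \<gamma>_lip[of R], of "x (tk (Suc k))" "x (tk k)"] by (simp add: dist_norm)
  also have "\<dots> \<le> \<gamma>_lip R * (f_bound R U * h)"
    using state_increment_le[OF assms] lipschitz_on_nonneg[OF \<gamma>_lip]
    by (intro mult_left_mono) (simp_all add: R_def U_def h_def)
  finally have "norm (\<gamma> (x (tk (Suc k))) - \<gamma> (x (tk k))) \<le> \<gamma>_lip R * f_bound R U * h"
    by (simp add: mult.assoc)
  moreover have "norm (Uk k (tk (Suc k)) - Uk k (tk k))
      \<le> real CARD('m) * (real (Suc p) * coef_bound (x 0) * basis_lip) * h"
    using Uk_increment_le[OF fin h] by (simp add: h_def)
  ultimately have "norm (Uk k (tk (Suc k)) - Uk k (tk k)) + norm (\<gamma> (x (tk (Suc k))) - \<gamma> (x (tk k)))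
      \<le> error_rate (x 0) * h"
    by (simp add: error_rate_def R_def U_def algebra_simps)
  moreover have "norm ((Uk k (tk (Suc k)) - \<gamma> (x (tk (Suc k)))) - (Uk k (tk k) - \<gamma> (x (tk k))))
      \<le> norm (Uk k (tk (Suc k)) - Uk k (tk k)) + norm (\<gamma> (x (tk (Suc k))) - \<gamma> (x (tk k)))"
    using norm_triangle_ineq4[of "Uk k (tk (Suc k)) - Uk k (tk k)" "\<gamma> (x (tk (Suc k))) - \<gamma> (x (tk k))"]
    by (simp add: algebra_simps)
  ultimately show ?thesis
    by (simp add: h_def)
qed

text \<open>Right after an event the input error is at most \<open>error_init\<close>; the trigger needs it to reach
  \<open>error_trigger\<close>, and it grows at most at rate \<open>error_rate\<close>.\<close>
lemma inter_event_gap: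
  assumes rb: "r < r_bound \<alpha>1 \<alpha>2 \<alpha>3 eps (V (x 0))" and fin: "te k < \<infinity>"
  shows "te k + ereal (dwell_time (x 0)) \<le> te (Suc k)"
proof (cases "te (Suc k) < \<infinity>")
  case True
  show ?thesis
  proof (rule ccontr)
    assume "\<not> ?thesis"
    then have lt: "tk (Suc k) - tk k < dwell_time (x 0)"
      using fin True te_nonneg[of k] te_nonneg[of "Suc k"] by (cases "te k"; cases "te (Suc k)") auto
    then have "tk (Suc k) \<le> tk k + T"
      by (simp add: dwell_time_def)
    have "error_trigger - error_init (x 0)
        \<le> norm (Uk k (tk (Suc k)) - \<gamma> (x (tk (Suc k)))) - norm (Uk k (tk k) - \<gamma> (x (tk k)))"
      using error_at_next_event_ge[OF True] error_at_event_le[OF fin] by simp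
    also have "\<dots> \<le> norm ((Uk k (tk (Suc k)) - \<gamma> (x (tk (Suc k)))) - (Uk k (tk k) - \<gamma> (x (tk k))))"
      by (rule norm_triangle_ineq2)
    also have "\<dots> \<le> error_rate (x 0) * (tk (Suc k) - tk k)"
      by (rule error_increment_le[OF True \<open>tk (Suc k) \<le> tk k + T\<close>])
    also have "\<dots> < (error_rate (x 0) + 1) * dwell_time (x 0)"
      using lt error_rate_nonneg[of "x 0"] below_r_bound(3)[OF rb]
      by (smt (verit) mult_left_mono mult_strict_right_mono)
    also have "\<dots> \<le> error_trigger - error_init (x 0)"
    proof -
      have "0 < error_rate (x 0) + 1"
        using error_rate_nonneg[of "x 0"] by simp
      moreover have "dwell_time (x 0) \<le> (error_trigger - error_init (x 0)) / (error_rate (x 0) + 1)"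
        by (simp add: dwell_time_def)
      ultimately show ?thesis
        by (simp add: pos_le_divide_eq mult.commute)
    qed
    finally show False
      by simp
  qed
qed (simp add: top.not_eq_extremum)

lemma event_time_lower_bound:
  assumes "r < r_bound \<alpha>1 \<alpha>2 \<alpha>3 eps (V (x 0))"
  shows "ereal (real k * dwell_time (x 0)) \<le> te k"
proof (induction k)
  case (Suc k)
  show ?case
  proof (cases "te k < \<infinity>")
    case True
    have "ereal (real (Suc k) * dwell_time (x 0)) = ereal (real k * dwell_time (x 0)) + ereal (dwell_time (x 0))"
      by (simp add: algebra_simps)
    also have "\<dots> \<le> te k + ereal (dwell_time (x 0))"
      using Suc by (rule add_right_mono)
    also have "\<dots> \<le> te (Suc k)"
      by (rule inter_event_gap[OF assms True])
    finally show ?thesis .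
  qed (use te_Suc_infinity[of k] in \<open>simp add: top.not_eq_extremum\<close>)
qed (simp add: te_0)

lemma less_t_max:
  assumes "r < r_bound \<alpha>1 \<alpha>2 \<alpha>3 eps (V (x 0))"
  shows "ereal t < t_max"
proof -
  obtain k where "t < real k * dwell_time (x 0)"
    using below_r_bound(3)[OF assms] ex_less_of_nat_mult by blast
  then have "ereal t < ereal (real k * dwell_time (x 0))"
    by simp
  then have "ereal t < te k"
    using event_time_lower_bound[OF assms, of k] by (rule less_le_trans)
  then show ?thesis
    by (auto simp: less_SUP_iff)
qed

lemma ultimately_in_sublevel_set:
  assumes "r < r_bound \<alpha>1 \<alpha>2 \<alpha>3 eps (V (x 0))" "norm (x 0) \<le> b" "settling_time b \<le> t"
  shows "norm (x t) \<le> Kinv \<alpha>1 eps"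
proof -
  have t: "0 \<le> t"
    using assms(3) by (simp add: settling_time_def)
  have "0 < \<kappa>"
    using below_r_bound(1)[OF assms(1)] by (intro class_Kinf_pos[OF A1_K(3)] Kinv_pos[OF A1_K(2)])
  have "V (x t) \<le> eps"
  proof (cases "\<exists>s\<in>{0..t}. V (x s) \<le> eps")
    case True
    then show ?thesis
      using sublevel_set_invariant less_t_max[OF assms(1)] by auto
  next
    case False
    then have "V (x t) \<le> V (x 0) - (1 - \<sigma>) * \<kappa> * (t - 0)"
      using t by (intro V_decrease_outside_sublevel_set less_t_max[OF assms(1)]) (auto simp: not_le intro: less_imp_le)
    moreover have "V (x 0) \<le> \<alpha>2 b"
      using A1_sandwich[of "x 0"] class_Kinf_le_iff[OF A1_K(2) norm_ge_zero[of "x 0"], of b] assms(2)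
      by (meson norm_ge_zero order_trans)
    moreover have "\<alpha>2 b - eps \<le> (1 - \<sigma>) * \<kappa> * t"
      using assms(3) \<open>0 < \<kappa>\<close> \<sigma> by (simp add: settling_time_def pos_divide_le_eq mult.commute)
    ultimately show ?thesis
      by simp
  qed
  then show ?thesis
    by (rule norm_le_Kinv_\<alpha>1)
qed

end

lemma inter_event_times_bounded_below:
  "\<exists>\<tau>>0. \<forall>d x u te a xh.
     closed_loop_solution f \<gamma> V \<alpha>2 \<alpha>3 \<rho>1 \<rho>2 D p \<phi> T \<sigma> r d x u te a xh
     \<and> x 0 = x0 \<and> r < r_bound \<alpha>1 \<alpha>2 \<alpha>3 eps (V x0)
     \<longrightarrow> (\<forall>k\<ge>1. te k < \<infinity> \<longrightarrow> te k + ereal \<tau> \<le> te (Suc k))"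
proof (cases "r < r_bound \<alpha>1 \<alpha>2 \<alpha>3 eps (V x0)")
  case True
  show ?thesis
    using below_r_bound(3)[OF True] inter_event_gap by (intro exI[of _ "dwell_time x0"]) auto
qed (intro exI[of _ 1], simp)

lemma uniformly_ultimately_bounded:
  "\<exists>t0\<ge>0. \<forall>d x u te a xh.
     closed_loop_solution f \<gamma> V \<alpha>2 \<alpha>3 \<rho>1 \<rho>2 D p \<phi> T \<sigma> r d x u te a xh
     \<and> norm (x 0) \<le> b \<and> r < r_bound \<alpha>1 \<alpha>2 \<alpha>3 eps (V (x 0))
     \<longrightarrow> (\<forall>t\<ge>t0. norm (x t) \<le> Kinv \<alpha>1 eps)"
  using ultimately_in_sublevel_set by (intro exI[of _ "settling_time b"]) (auto simp: settling_time_def)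

end

theorem theorem1:
  fixes f :: "real^'n \<Rightarrow> real^'m \<Rightarrow> real^'q \<Rightarrow> real^'n"
    and \<gamma> :: "real^'n \<Rightarrow> real^'m"
    and V :: "real^'n \<Rightarrow> real"
    and gradV :: "real^'n \<Rightarrow> real^'n"
    and \<alpha>1 \<alpha>2 \<alpha>3 \<rho>1 \<rho>2 :: "real \<Rightarrow> real"
    and D T \<sigma> r :: real
    and p :: nat
    and \<phi> :: "nat \<Rightarrow> real \<Rightarrow> real"
  assumes A1_V: "\<And>z. (V has_derivative (\<lambda>h. gradV z \<bullet> h)) (at z)"
    and A1_C1: "continuous_on UNIV gradV"
    and A1_K: "class_Kinf \<alpha>1" "class_Kinf \<alpha>2" "class_Kinf \<alpha>3" "class_Kinf \<rho>1" "class_Kinf \<rho>2"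
    and A1_sandwich: "\<And>z. \<alpha>1 (norm z) \<le> V z \<and> V z \<le> \<alpha>2 (norm z)"
    and A1_ISS: "\<And>z e w. gradV z \<bullet> f z (\<gamma> z + e) w
                     \<le> - \<alpha>3 (norm z) + \<rho>1 (norm e) + \<rho>2 (norm w)"
    and A2_f: "\<And>C. compact C \<Longrightarrow> \<exists>L. L-lipschitz_on C (\<lambda>(z, v, w). f z v w)"
    and A2_\<gamma>: "\<And>C. compact C \<Longrightarrow> \<exists>L. L-lipschitz_on C \<gamma>"
    and A2_0: "f 0 0 0 = 0" "\<gamma> 0 = 0"
    and A3: "D \<ge> 0"
    and A4_C1: "\<And>j. j \<le> p \<Longrightarrow> \<exists>\<phi>'. continuous_on {0..} \<phi>'
                    \<and> (\<forall>\<tau>\<ge>0. (\<phi> j has_real_derivative \<phi>' \<tau>) (at \<tau> within {0..}))"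
    and A4_const: "\<exists>c. c \<noteq> 0 \<and> (\<forall>\<tau>\<ge>0. \<phi> 0 \<tau> = c)"
    and A4_T: "T > 0"
    and A4_indep: "\<And>c. (\<forall>\<tau>\<in>{0..T}. gfun p \<phi> c \<tau> = 0) \<Longrightarrow> \<forall>j\<le>p. c j = 0"
    and \<sigma>: "0 < \<sigma>" "\<sigma> < 1"
    and r: "0 \<le> r"
  shows
    "(\<forall>x0. \<exists>\<tau>>0. \<forall>d x u te a xh.
        closed_loop_solution f \<gamma> V \<alpha>2 \<alpha>3 \<rho>1 \<rho>2 D p \<phi> T \<sigma> r d x u te a xh
        \<and> x 0 = x0
        \<and> r < r_bound \<alpha>1 \<alpha>2 \<alpha>3 (trig_eps \<alpha>2 \<alpha>3 \<rho>2 D \<sigma>) (V x0)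
        \<longrightarrow> (\<forall>k\<ge>1. te k < \<infinity> \<longrightarrow> te k + ereal \<tau> \<le> te (Suc k)))
   \<and> (\<forall>b. \<exists>Tb\<ge>0. \<forall>d x u te a xh.
        closed_loop_solution f \<gamma> V \<alpha>2 \<alpha>3 \<rho>1 \<rho>2 D p \<phi> T \<sigma> r d x u te a xh
        \<and> norm (x 0) \<le> b
        \<and> r < r_bound \<alpha>1 \<alpha>2 \<alpha>3 (trig_eps \<alpha>2 \<alpha>3 \<rho>2 D \<sigma>) (V (x 0))
        \<longrightarrow> (\<forall>t\<ge>Tb. norm (x t) \<le> Kinv \<alpha>1 (trig_eps \<alpha>2 \<alpha>3 \<rho>2 D \<sigma>)))"
proof -
  interpret event_triggered_system f \<gamma> V gradV \<alpha>1 \<alpha>2 \<alpha>3 \<rho>1 \<rho>2 D T \<sigma> r p \<phi>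
    by (rule event_triggered_system.intro)
      (fact A1_V A1_C1 A1_K A1_sandwich A1_ISS A2_f A2_\<gamma> A2_0 A3 A4_C1 A4_const A4_T A4_indep \<sigma> r)+
  show ?thesis
    using inter_event_times_bounded_below uniformly_ultimately_bounded by blast
qed

end
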